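(* Let $G$ be a directed graph with $n$ vertices and distinct vertices $s,t$, and let $k\ge1$. The set $J(L^* )$ of join-irreducible elements of $L^*$ has size $O(kn)$ and is given by $J(L^* )=\bigcup_{i=1}^kJ_i$, where $J_i=\{(\underbrace{0_L,\dots,0_L}_{i-1},\underbrace{p,\dots,p}_{k-i+1}):p\in J(L)\}$.
   Context: An $s$-$t$ cut of $G$ is a set $X\subseteq E(G)$ such that removing $X$ leaves no directed $s$-$t$ path; $\Gamma_G(s,t)$ is the set of $s$-$t$ cuts of minimum cardinality. Fix a maximum-size collection $\mathcal P$ of pairwise edge-disjoint directed $s$-$t$ paths (each minimum $s$-$t$ cut contains exactly one edge of each path in $\mathcal P$). For $X,Y\in\Gamma_G(s,t)$, $S_{\min}(X\cup Y)$ (resp. $S_{\max}(X\cup Y)$) consists, for each $p\in\mathcal P$, of the edge of $(X\cup Y)\cap p$ occurring first (resp. last) along $p$. $X\le Y$ means every directed $s$-$t$ path meets an edge of $X$ at or before an edge of $Y$. $L$ denotes the distributive lattice $(\Gamma_G(s,t),\le)$ with join $X\vee Y=S_{\max}(X\cup Y)$ and meet $X\wedge Y=S_{\min}(X\cup Y)$; $0_L$ is its least element (the leftmost minimum $s$-$t$ cut). An element $x$ of a lattice is join-irreducible if it is not the least element and cannot be written as $y\vee z$ with $y,z\ne x$; $J(L)$ is the set of join-irreducibles of $L$. $U^k_{\mathrm{lr}}$ is the set of $k$-tuples $[X_1,\dots,X_k]$ of elements of $\Gamma_G(s,t)$ with $X_i\le X_j$ for all $i<j$, and $L^*$ is the lattice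 on $U^k_{\mathrm{lr}}$ with componentwise order, join $[S_{\max}(X_i\cup Y_i)]_i$ and meet $[S_{\min}(X_i\cup Y_i)]_i$. *)

theory Defs
  imports Main
begin

text \<open>A finite directed multigraph: vertex set V, edge set E (edge identifiers),
  each edge e goes from src e to dst e. Vertices and edges are natural numbers.\<close>

definition digraph :: "nat set \<Rightarrow> nat set \<Rightarrow> (nat \<Rightarrow> nat) \<Rightarrow> (nat \<Rightarrow> nat) \<Rightarrow> bool" where
  "digraph V E src dst \<longleftrightarrow> finite V \<and> finite E \<and> (\<forall>e\<in>E. src e \<in> V \<and> dst e \<in> V)"

definition is_path :: "nat set \<Rightarrow> (nat \<Rightarrow> nat) \<Rightarrow> (nat \<Rightarrow> nat) \<Rightarrow> nat \<Rightarrow> nat \<Rightarrow> nat list \<Rightarrow> bool" where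
  "is_path E src dst s t p \<longleftrightarrow>
     p \<noteq> [] \<and> set p \<subseteq> E \<and> src (hd p) = s \<and> dst (last p) = t \<and>
     (\<forall>i. Suc i < length p \<longrightarrow> dst (p ! i) = src (p ! Suc i)) \<and>
     distinct (s # map dst p)"

definition is_cut :: "nat set \<Rightarrow> (nat \<Rightarrow> nat) \<Rightarrow> (nat \<Rightarrow> nat) \<Rightarrow> nat \<Rightarrow> nat \<Rightarrow> nat set \<Rightarrow> bool" where
  "is_cut E src dst s t X \<longleftrightarrow> X \<subseteq> E \<and> (\<forall>p. is_path E src dst s t p \<longrightarrow> set p \<inter> X \<noteq> {})"

definition min_cuts :: "nat set \<Rightarrow> (nat \<Rightarrow> nat) \<Rightarrow> (nat \<Rightarrow> nat) \<Rightarrow> nat \<Rightarrow> nat \<Rightarrow> nat set set" where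
  "min_cuts E src dst s t =
     {X. is_cut E src dst s t X \<and> (\<forall>Y. is_cut E src dst s t Y \<longrightarrow> card X \<le> card Y)}"

definition path_packing :: "nat set \<Rightarrow> (nat \<Rightarrow> nat) \<Rightarrow> (nat \<Rightarrow> nat) \<Rightarrow> nat \<Rightarrow> nat \<Rightarrow> nat list set \<Rightarrow> bool" where
  "path_packing E src dst s t Q \<longleftrightarrow> finite Q \<and> (\<forall>p\<in>Q. is_path E src dst s t p) \<and>
     (\<forall>p\<in>Q. \<forall>q\<in>Q. p \<noteq> q \<longrightarrow> set p \<inter> set q = {})"

definition max_path_packing :: "nat set \<Rightarrow> (nat \<Rightarrow> nat) \<Rightarrow> (nat \<Rightarrow> nat) \<Rightarrow> nat \<Rightarrow> nat \<Rightarrow> nat list set \<Rightarrow> bool" where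
  "max_path_packing E src dst s t P \<longleftrightarrow> path_packing E src dst s t P \<and>
     (\<forall>Q. path_packing E src dst s t Q \<longrightarrow> card Q \<le> card P)"

definition S_min :: "nat list set \<Rightarrow> nat set \<Rightarrow> nat set" where
  "S_min P Z = (\<lambda>p. hd (filter (\<lambda>e. e \<in> Z) p)) ` P"

definition S_max :: "nat list set \<Rightarrow> nat set \<Rightarrow> nat set" where
  "S_max P Z = (\<lambda>p. last (filter (\<lambda>e. e \<in> Z) p)) ` P"

definition cut_le :: "nat set \<Rightarrow> (nat \<Rightarrow> nat) \<Rightarrow> (nat \<Rightarrow> nat) \<Rightarrow> nat \<Rightarrow> nat \<Rightarrow> nat set \<Rightarrow> nat set \<Rightarrow> bool" where
  "cut_le E src dst s t X Y \<longleftrightarrow>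
     (\<forall>p. is_path E src dst s t p \<longrightarrow> (\<exists>i<length p. p ! i \<in> X \<and> (\<forall>j<i. p ! j \<notin> Y)))"

definition cut_join :: "nat list set \<Rightarrow> nat set \<Rightarrow> nat set \<Rightarrow> nat set" where
  "cut_join P X Y = S_max P (X \<union> Y)"

definition cut_meet :: "nat list set \<Rightarrow> nat set \<Rightarrow> nat set \<Rightarrow> nat set" where
  "cut_meet P X Y = S_min P (X \<union> Y)"

definition zero_L :: "nat set \<Rightarrow> (nat \<Rightarrow> nat) \<Rightarrow> (nat \<Rightarrow> nat) \<Rightarrow> nat \<Rightarrow> nat \<Rightarrow> nat set" where
  "zero_L E src dst s t = (THE X. X \<in> min_cuts E src dst s t \<and>
      (\<forall>Y\<in>min_cuts E src dst s t. cut_le E src dst s t X Y))"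

definition join_irreducible :: "'a set \<Rightarrow> ('a \<Rightarrow> 'a \<Rightarrow> bool) \<Rightarrow> ('a \<Rightarrow> 'a \<Rightarrow> 'a) \<Rightarrow> 'a \<Rightarrow> bool" where
  "join_irreducible A le join x \<longleftrightarrow> x \<in> A \<and> \<not> (\<forall>y\<in>A. le x y) \<and>
     \<not> (\<exists>y\<in>A. \<exists>z\<in>A. y \<noteq> x \<and> z \<noteq> x \<and> join y z = x)"

definition J_L :: "nat set \<Rightarrow> (nat \<Rightarrow> nat) \<Rightarrow> (nat \<Rightarrow> nat) \<Rightarrow> nat \<Rightarrow> nat \<Rightarrow> nat list set \<Rightarrow> nat set set" where
  "J_L E src dst s t P = {x. join_irreducible (min_cuts E src dst s t) (cut_le E src dst s t) (cut_join P) x}"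

definition U_lr :: "nat set \<Rightarrow> (nat \<Rightarrow> nat) \<Rightarrow> (nat \<Rightarrow> nat) \<Rightarrow> nat \<Rightarrow> nat \<Rightarrow> nat \<Rightarrow> nat set list set" where
  "U_lr E src dst s t k = {xs. length xs = k \<and> set xs \<subseteq> min_cuts E src dst s t \<and>
      (\<forall>i j. i < j \<and> j < k \<longrightarrow> cut_le E src dst s t (xs ! i) (xs ! j))}"

definition star_le :: "nat set \<Rightarrow> (nat \<Rightarrow> nat) \<Rightarrow> (nat \<Rightarrow> nat) \<Rightarrow> nat \<Rightarrow> nat \<Rightarrow> nat set list \<Rightarrow> nat set list \<Rightarrow> bool" where
  "star_le E src dst s t xs ys \<longleftrightarrow> length xs = length ys \<and>
      (\<forall>i<length xs. cut_le E src dst s t (xs ! i) (ys ! i))"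

definition star_join :: "nat list set \<Rightarrow> nat set list \<Rightarrow> nat set list \<Rightarrow> nat set list" where
  "star_join P xs ys = map2 (cut_join P) xs ys"

definition star_meet :: "nat list set \<Rightarrow> nat set list \<Rightarrow> nat set list \<Rightarrow> nat set list" where
  "star_meet P xs ys = map2 (cut_meet P) xs ys"

definition J_star :: "nat set \<Rightarrow> (nat \<Rightarrow> nat) \<Rightarrow> (nat \<Rightarrow> nat) \<Rightarrow> nat \<Rightarrow> nat \<Rightarrow> nat list set \<Rightarrow> nat \<Rightarrow> nat set list set" where
  "J_star E src dst s t P k = {xs. join_irreducible (U_lr E src dst s t k) (star_le E src dst s t) (star_join P) xs}"

definition J_i :: "nat set \<Rightarrow> (nat \<Rightarrow> nat) \<Rightarrow> (nat \<Rightarrow> nat) \<Rightarrow> nat \<Rightarrow> nat \<Rightarrow> nat list set \<Rightarrow> nat \<Rightarrow> nat \<Rightarrow> nat set list set" where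
  "J_i E src dst s t P k i = {replicate (i - 1) (zero_L E src dst s t) @ replicate (k - i + 1) p | p. p \<in> J_L E src dst s t P}"

end

theory Submission
  imports Defs
begin

text \<open>
  Every minimum \<open>s\<close>-\<open>t\<close> cut meets each path of the maximum packing \<open>P\<close> in exactly one edge: the
  edges leaving the vertices reachable from \<open>s\<close> in the residual graph of \<open>P\<close> form a cut of size
  \<open>|P|\<close>, because an augmenting path would, by flow decomposition, contradict the maximality of \<open>P\<close>.
  So a minimum cut is a choice of one edge on each path; \<open>\<le>\<close>, \<open>S_max\<close> and \<open>S_min\<close> become the
  componentwise order, maximum and minimum of positions along the paths, and the residual cut is \<open>0\<^sub>L\<close>.

  In any join-semilattice with least element \<open>0\<close>, a monotone \<open>k\<close>-tuple whose first nonzero entry \<open>p\<close>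
  is at position \<open>i\<close> is the join of \<open>(0,\<dots>,0,p,\<dots>,p)\<close> with the tuple zeroed up to position \<open>i\<close>.
  Hence the join-irreducible tuples are exactly these step tuples with \<open>p\<close> join-irreducible.

  For the bound, each join-irreducible cut \<open>X\<close> has a path \<open>p\<close> such that \<open>X \<le> Y\<close> whenever the edge
  of \<open>X\<close> on \<open>p\<close> comes no later than that of \<open>Y\<close> (otherwise \<open>X\<close> would be a join of cuts strictly
  below it). The tail of this edge determines \<open>X\<close>, so \<open>|J(L)| \<le> n\<close> and \<open>|J(L\<^sup>*)| \<le> k n\<close>.
\<close>

section \<open>Walks\<close>

fun walk :: "('e \<Rightarrow> 'v) \<Rightarrow> ('e \<Rightarrow> 'v) \<Rightarrow> ('e \<Rightarrow> bool) \<Rightarrow> 'v \<Rightarrow> 'e list \<Rightarrow> 'v \<Rightarrow> bool" where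
  "walk src dst ok u [] v \<longleftrightarrow> u = v"
| "walk src dst ok u (e # es) v \<longleftrightarrow> ok e \<and> src e = u \<and> walk src dst ok (dst e) es v"

lemma walk_append:
  "walk src dst ok u (as @ bs) v \<longleftrightarrow> (\<exists>w. walk src dst ok u as w \<and> walk src dst ok w bs v)"
  by (induction as arbitrary: u) auto

lemma walk_append_Cons:
  "walk src dst ok u (as @ e # bs) v \<longleftrightarrow>
     walk src dst ok u as (src e) \<and> ok e \<and> walk src dst ok (dst e) bs v"
  by (induction as arbitrary: u) auto

lemma walk_edge_ok: "walk src dst ok u es v \<Longrightarrow> e \<in> set es \<Longrightarrow> ok e"
  by (induction es arbitrary: u) auto

lemma walk_mono: "walk src dst ok u es v \<Longrightarrow> (\<And>e. e \<in> set es \<Longrightarrow> ok e \<Longrightarrow> ok' e) \<Longrightarrow> walk src dst ok' u es v"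
  by (induction es arbitrary: u) auto

lemma walk_iff_chain:
  assumes "es \<noteq> []"
  shows "walk src dst ok u es v \<longleftrightarrow> (\<forall>e\<in>set es. ok e) \<and> src (hd es) = u \<and> dst (last es) = v \<and>
           (\<forall>i. Suc i < length es \<longrightarrow> dst (es ! i) = src (es ! Suc i))"
  using assms
proof (induction es arbitrary: u rule: list_nonempty_induct)
  case (cons e es)
  have "(\<forall>i. Suc i < length (e # es) \<longrightarrow> dst ((e # es) ! i) = src ((e # es) ! Suc i)) \<longleftrightarrow>
        dst e = src (hd es) \<and> (\<forall>i. Suc i < length es \<longrightarrow> dst (es ! i) = src (es ! Suc i))"
    using cons.hyps by (auto simp: hd_conv_nth nth_Cons split: nat.splits)
  then show ?case using cons.IH[of "dst e"] cons.hyps by auto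
qed simp

lemma is_path_iff_walk:
  "is_path E src dst s t p \<longleftrightarrow> p \<noteq> [] \<and> walk src dst (\<lambda>e. e \<in> E) s p t \<and> distinct (s # map dst p)"
  unfolding is_path_def using walk_iff_chain[of p src dst "\<lambda>e. e \<in> E" s t] by auto

lemma walk_contains_path:
  "walk src dst ok u es v \<Longrightarrow> \<exists>es'. walk src dst ok u es' v \<and> set es' \<subseteq> set es \<and> distinct (u # map dst es')"
proof (induction es arbitrary: u)
  case (Cons e es)
  then have e: "ok e" "src e = u" and rest: "walk src dst ok (dst e) es v" by auto
  from Cons.IH[OF rest] obtain es' where es':
    "walk src dst ok (dst e) es' v" "set es' \<subseteq> set es" "distinct (dst e # map dst es')" by blast
  show ?case
  proof (cases "u \<in> set (map dst (e # es'))")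
    case True
    then obtain f where f: "f \<in> set (e # es')" "dst f = u" by auto
    then obtain as bs where split: "e # es' = as @ f # bs" by (meson split_list)
    have "walk src dst ok u (e # es') v" using e es' by simp
    then have "walk src dst ok u bs v" using split f by (auto simp: walk_append)
    moreover have "distinct (u # map dst bs)"
      using es'(3) split f by (auto simp: Cons_eq_append_conv)
    moreover have "set bs \<subseteq> set (e # es')" unfolding split by auto
    then have "set bs \<subseteq> set (e # es)" using es'(2) by auto
    ultimately show ?thesis by blast
  next
    case False
    then show ?thesis using e es' by (intro exI[of _ "e # es'"]) auto
  qed
qed simp

lemma walk_if_rtrancl:
  "(u, v) \<in> {(src e, dst e) | e. ok e}\<^sup>* \<Longrightarrow> \<exists>es. walk src dst ok u es v"
proof (induction rule: rtrancl_induct)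
  case base
  show ?case by (intro exI[of _ "[]"]) simp
next
  case (step w x)
  then obtain es e where "walk src dst ok u es w" "ok e" "w = src e" "x = dst e" by auto
  then show ?case by (intro exI[of _ "es @ [e]"]) (auto simp: walk_append)
qed

lemma walk_leaves_set:
  "walk src dst ok u es w \<Longrightarrow> u \<in> S \<Longrightarrow> w \<notin> S \<Longrightarrow> \<exists>e\<in>set es. src e \<in> S \<and> dst e \<notin> S"
proof (induction es arbitrary: u)
  case (Cons e es)
  then show ?case by (cases "dst e \<in> S") auto
qed simp

section \<open>Order of elements along a list\<close>

definition precedes :: "'a list \<Rightarrow> 'a \<Rightarrow> 'a \<Rightarrow> bool" where
  "precedes p e f \<longleftrightarrow> (\<exists>as bs. p = as @ e # bs \<and> f \<in> set (e # bs))"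

lemma precedes_refl: "e \<in> set p \<Longrightarrow> precedes p e e"
  unfolding precedes_def by (meson list.set_intros(1) split_list)

lemma precedes_total:
  assumes "e \<in> set p" "f \<in> set p"
  shows "precedes p e f \<or> precedes p f e"
proof -
  obtain as bs where p: "p = as @ e # bs" using assms(1) by (meson split_list)
  show ?thesis
  proof (cases "f \<in> set (e # bs)")
    case True
    then show ?thesis using p unfolding precedes_def by blast
  next
    case False
    then have "f \<in> set as" using p assms(2) by auto
    then obtain as1 as2 where "as = as1 @ f # as2" by (meson split_list)
    then have "p = as1 @ f # (as2 @ e # bs)" using p by simp
    then show ?thesis unfolding precedes_def by force
  qed
qed

lemma precedes_strict_split:
  "precedes p e f \<Longrightarrow> e \<noteq> f \<Longrightarrow> \<exists>as bs cs. p = as @ e # bs @ f # cs"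
  unfolding precedes_def by (metis set_ConsD split_list)

lemma distinct_split_unique:
  "distinct p \<Longrightarrow> p = as @ x # bs \<Longrightarrow> p = as' @ x # bs' \<Longrightarrow> as = as' \<and> bs = bs'"
  by (metis append_Cons_eq_iff distinct.simps(2) distinct_append not_distinct_conv_prefix)

lemma precedes_antisym: "distinct p \<Longrightarrow> precedes p e f \<Longrightarrow> precedes p f e \<Longrightarrow> e = f"
proof (rule ccontr)
  assume p: "distinct p" and ef: "precedes p e f" and fe: "precedes p f e" and "e \<noteq> f"
  then obtain as bs cs where split: "p = (as @ e # bs) @ f # cs" using precedes_strict_split by fastforce
  from fe obtain as' bs' where split': "p = as' @ f # bs'" "e \<in> set (f # bs')"
    unfolding precedes_def by blast
  have "bs' = cs" using distinct_split_unique[OF p split split'(1)] by blast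
  then have "e \<in> set cs" using split'(2) \<open>e \<noteq> f\<close> by auto
  then show False using p split by auto
qed

lemma precedes_trans:
  assumes p: "distinct p" and ef: "precedes p e f" and fg: "precedes p f g"
  shows "precedes p e g"
proof -
  from ef obtain as bs where split: "p = as @ e # bs" "f \<in> set (e # bs)" unfolding precedes_def by blast
  from fg obtain as' bs' where split': "p = as' @ f # bs'" "g \<in> set (f # bs')"
    unfolding precedes_def by blast
  have "set (f # bs') \<subseteq> set (e # bs)"
  proof (cases "f = e")
    case True
    then show ?thesis using distinct_split_unique[OF p split(1)] split' by auto
  next
    case False
    then obtain bs1 bs2 where "bs = bs1 @ f # bs2" using split(2) by (meson set_ConsD split_list)
    then have "p = (as @ e # bs1) @ f # bs2" using split by simp
    then have "bs' = bs2" using distinct_split_unique[OF p _ split'(1)] by blast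
    then show ?thesis using \<open>bs = bs1 @ f # bs2\<close> by auto
  qed
  then show ?thesis using split split' unfolding precedes_def by blast
qed

definition later :: "'a list \<Rightarrow> 'a \<Rightarrow> 'a \<Rightarrow> 'a" where
  "later p x y = (if precedes p x y then y else x)"

definition earlier :: "'a list \<Rightarrow> 'a \<Rightarrow> 'a \<Rightarrow> 'a" where
  "earlier p x y = (if precedes p x y then x else y)"

lemma precedes_later1: "x \<in> set p \<Longrightarrow> precedes p x (later p x y)"
  unfolding later_def using precedes_refl by auto

lemma precedes_later2: "x \<in> set p \<Longrightarrow> y \<in> set p \<Longrightarrow> precedes p y (later p x y)"
  unfolding later_def using precedes_refl precedes_total[of x p y] by auto

lemma precedes_earlier1: "x \<in> set p \<Longrightarrow> y \<in> set p \<Longrightarrow> precedes p (earlier p x y) x"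
  unfolding earlier_def using precedes_refl precedes_total[of x p y] by auto

lemma precedes_earlier2: "y \<in> set p \<Longrightarrow> precedes p (earlier p x y) y"
  unfolding earlier_def using precedes_refl by auto

lemma distinct_singleton_set: "distinct xs \<Longrightarrow> set xs = {y} \<Longrightarrow> xs = [y]"
  by (cases xs) (auto simp: subset_singleton_iff)

lemma filter_first_last:
  assumes "distinct p" "precedes p x y" "set p \<inter> A = {x, y}"
  shows "hd (filter (\<lambda>e. e \<in> A) p) = x \<and> last (filter (\<lambda>e. e \<in> A) p) = y"
proof -
  obtain as bs where p: "p = as @ x # bs" "y \<in> set (x # bs)"
    using assms(2) unfolding precedes_def by blast
  have x: "x \<in> A" "x \<notin> set as" "x \<notin> set bs" "y \<notin> set as" using assms p by auto
  then have "filter (\<lambda>e. e \<in> A) as = []"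
    using assms(3) p(1) by (auto simp: filter_empty_conv)
  moreover have "filter (\<lambda>e. e \<in> A) bs = (if y = x then [] else [y])"
  proof (cases "y = x")
    case True
    then show ?thesis using assms(3) p(1) x by (auto simp: filter_empty_conv)
  next
    case False
    have "set (filter (\<lambda>e. e \<in> A) bs) = {y}" using False assms(3) p x by auto
    moreover have "distinct (filter (\<lambda>e. e \<in> A) bs)" using assms(1) p(1) by auto
    ultimately show ?thesis using False distinct_singleton_set by (metis (lifting))
  qed
  ultimately show ?thesis using x p(1) by auto
qed

lemma filter_last_hd_eq_later_earlier:
  assumes "distinct p" "set p \<inter> A = {x, y}"
  shows "last (filter (\<lambda>e. e \<in> A) p) = later p x y" and "hd (filter (\<lambda>e. e \<in> A) p) = earlier p x y"
proof -
  have "last (filter (\<lambda>e. e \<in> A) p) = later p x y \<and> hd (filter (\<lambda>e. e \<in> A) p) = earlier p x y"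
  proof (cases "precedes p x y")
    case True
    then show ?thesis
      using filter_first_last[OF assms(1) True assms(2)] unfolding later_def earlier_def by simp
  next
    case False
    have "x \<in> set p" "y \<in> set p" using assms(2) by auto
    then have "precedes p y x" using precedes_total[of x p y] False by blast
    moreover have "set p \<inter> A = {y, x}" using assms(2) by auto
    ultimately show ?thesis
      using filter_first_last[OF assms(1) \<open>precedes p y x\<close>] False unfolding later_def earlier_def by simp
  qed
  then show "last (filter (\<lambda>e. e \<in> A) p) = later p x y" "hd (filter (\<lambda>e. e \<in> A) p) = earlier p x y"
    by simp_all
qed

lemma split_list_first_hit:
  "set q \<inter> X \<noteq> {} \<Longrightarrow> \<exists>as e bs. q = as @ e # bs \<and> e \<in> X \<and> set as \<inter> X = {}"
  using split_list_first_prop[of q "\<lambda>e. e \<in> X"] by fastforce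

lemma split_list_last_hit:
  "set q \<inter> X \<noteq> {} \<Longrightarrow> \<exists>as e bs. q = as @ e # bs \<and> e \<in> X \<and> set bs \<inter> X = {}"
  using split_list_last_prop[of q "\<lambda>e. e \<in> X"] by fastforce

lemma ex_nth_before_iff_split:
  "(\<exists>i<length q. q ! i \<in> X \<and> (\<forall>j<i. q ! j \<notin> Y)) \<longleftrightarrow>
   (\<exists>as e bs. q = as @ e # bs \<and> e \<in> X \<and> set as \<inter> Y = {})"
proof
  assume "\<exists>i<length q. q ! i \<in> X \<and> (\<forall>j<i. q ! j \<notin> Y)"
  then obtain i where i: "i < length q" "q ! i \<in> X" "\<forall>j<i. q ! j \<notin> Y" by blast
  have "q = take i q @ q ! i # drop (Suc i) q" using i(1) by (simp add: id_take_nth_drop)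
  moreover have "set (take i q) \<inter> Y = {}" using i by (auto simp: in_set_conv_nth)
  ultimately show "\<exists>as e bs. q = as @ e # bs \<and> e \<in> X \<and> set as \<inter> Y = {}" using i(2) by blast
next
  assume "\<exists>as e bs. q = as @ e # bs \<and> e \<in> X \<and> set as \<inter> Y = {}"
  then obtain as e bs where q: "q = as @ e # bs" "e \<in> X" "set as \<inter> Y = {}" by blast
  then have "q ! j \<notin> Y" if "j < length as" for j
    using that q(1,3) nth_mem[of j as] by (auto simp: nth_append disjoint_iff)
  then show "\<exists>i<length q. q ! i \<in> X \<and> (\<forall>j<i. q ! j \<notin> Y)"
    using q by (intro exI[of _ "length as"]) auto
qed

section \<open>Net flow and flow decomposition\<close>

definition endpoint_count :: "('e \<Rightarrow> 'v) \<Rightarrow> 'e set \<Rightarrow> 'v \<Rightarrow> nat" where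
  "endpoint_count f F v = card {e \<in> F. f e = v}"

definition net_flow :: "('e \<Rightarrow> 'v) \<Rightarrow> ('e \<Rightarrow> 'v) \<Rightarrow> 'e set \<Rightarrow> 'v \<Rightarrow> int" where
  "net_flow src dst F v = int (endpoint_count src F v) - int (endpoint_count dst F v)"

lemma endpoint_count_diff:
  assumes "finite F" "A \<subseteq> F"
  shows "int (endpoint_count f (F - A) v) = int (endpoint_count f F v) - int (endpoint_count f A v)"
proof -
  have "{e \<in> F - A. f e = v} = {e \<in> F. f e = v} - {e \<in> A. f e = v}" by auto
  moreover have "{e \<in> A. f e = v} \<subseteq> {e \<in> F. f e = v}" using assms by auto
  ultimately show ?thesis unfolding endpoint_count_def using assms
    by (simp add: card_Diff_subset card_mono finite_subset of_nat_diff)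
qed

lemma endpoint_count_UN:
  assumes "finite I" "\<And>i. i \<in> I \<Longrightarrow> finite (A i)"
    and "\<And>i j. i \<in> I \<Longrightarrow> j \<in> I \<Longrightarrow> i \<noteq> j \<Longrightarrow> A i \<inter> A j = {}"
  shows "endpoint_count f (\<Union>i\<in>I. A i) v = (\<Sum>i\<in>I. endpoint_count f (A i) v)"
proof -
  have "{e \<in> (\<Union>i\<in>I. A i). f e = v} = (\<Union>i\<in>I. {e \<in> A i. f e = v})" by auto
  moreover have "card (\<Union>i\<in>I. {e \<in> A i. f e = v}) = (\<Sum>i\<in>I. card {e \<in> A i. f e = v})"
    by (rule card_UN_disjoint) (use assms in auto)
  ultimately show ?thesis unfolding endpoint_count_def by simp
qed

lemma sum_endpoint_count:
  assumes "finite F" "finite R"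
  shows "(\<Sum>v\<in>R. endpoint_count f F v) = card {e \<in> F. f e \<in> R}"
proof -
  have "{e \<in> F. f e \<in> R} = (\<Union>v\<in>R. {e \<in> F. f e = v})" by auto
  then show ?thesis unfolding endpoint_count_def
    by (simp add: card_UN_disjoint assms disjoint_iff)
qed

lemma net_flow_diff:
  "finite F \<Longrightarrow> A \<subseteq> F \<Longrightarrow> net_flow src dst (F - A) v = net_flow src dst F v - net_flow src dst A v"
  unfolding net_flow_def by (simp add: endpoint_count_diff)

lemma net_flow_singleton:
  "net_flow src dst {e} v = (if src e = v then 1 else 0) - (if dst e = v then 1 else 0)"
proof -
  have "{x \<in> {e}. f x = v} = (if f e = v then {e} else {})" for f :: "'a \<Rightarrow> 'b" by auto
  then show ?thesis unfolding net_flow_def endpoint_count_def by simp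
qed

lemma net_flow_insert:
  assumes "finite F" "e \<notin> F"
  shows "net_flow src dst (insert e F) v = net_flow src dst F v + net_flow src dst {e} v"
  using net_flow_diff[of "insert e F" "{e}" src dst v] assms by simp

lemma net_flow_UN:
  assumes "finite I" "\<And>i. i \<in> I \<Longrightarrow> finite (A i)"
    and "\<And>i j. i \<in> I \<Longrightarrow> j \<in> I \<Longrightarrow> i \<noteq> j \<Longrightarrow> A i \<inter> A j = {}"
  shows "net_flow src dst (\<Union>i\<in>I. A i) v = (\<Sum>i\<in>I. net_flow src dst (A i) v)"
  unfolding net_flow_def by (simp add: endpoint_count_UN assms sum_subtractf)

lemma net_flow_walk:
  "walk src dst ok u es w \<Longrightarrow> distinct es \<Longrightarrow>
     net_flow src dst (set es) v = (if u = v then 1 else 0) - (if w = v then 1 else 0)"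
proof (induction es arbitrary: u)
  case Nil
  then show ?case by (simp add: net_flow_def endpoint_count_def)
next
  case (Cons e es)
  then have "net_flow src dst (set es) v = (if dst e = v then 1 else 0) - (if w = v then 1 else 0)"
    by simp
  then show ?case using Cons.prems by (simp add: net_flow_insert net_flow_singleton)
qed

lemma sum_net_flow_closed_nonpos:
  assumes "finite F" "finite R" and closed: "\<And>e. e \<in> F \<Longrightarrow> src e \<in> R \<Longrightarrow> dst e \<in> R"
  shows "(\<Sum>v\<in>R. net_flow src dst F v) \<le> 0"
proof -
  have "card {e \<in> F. src e \<in> R} \<le> card {e \<in> F. dst e \<in> R}"
    using assms by (intro card_mono) auto
  then show ?thesis
    unfolding net_flow_def sum_subtractf of_nat_sum[symmetric] sum_endpoint_count[OF assms(1,2)]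
    by simp
qed

lemma walk_if_net_flow_positive:
  assumes F: "finite F" and conserved: "\<And>v. v \<noteq> s \<Longrightarrow> v \<noteq> t \<Longrightarrow> net_flow src dst F v = 0"
    and source: "net_flow src dst F s > 0"
  shows "\<exists>es. walk src dst (\<lambda>e. e \<in> F) s es t"
proof -
  let ?R = "{v. (s, v) \<in> {(src e, dst e) | e. e \<in> F}\<^sup>*}"
  have "?R \<subseteq> insert s (dst ` F)"
    by (auto elim: rtranclE)
  then have "finite ?R" using F finite_subset by auto
  have "t \<in> ?R"
  proof (rule ccontr)
    assume "t \<notin> ?R"
    have "(\<Sum>v\<in>?R. net_flow src dst F v) = net_flow src dst F s + (\<Sum>v\<in>?R - {s}. net_flow src dst F v)"
      using \<open>finite ?R\<close> by (simp add: sum.remove)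
    also have "(\<Sum>v\<in>?R - {s}. net_flow src dst F v) = 0"
      using conserved \<open>t \<notin> ?R\<close> by (intro sum.neutral) auto
    finally have "(\<Sum>v\<in>?R. net_flow src dst F v) > 0" using source by simp
    moreover have "(\<Sum>v\<in>?R. net_flow src dst F v) \<le> 0"
      using F \<open>finite ?R\<close> by (rule sum_net_flow_closed_nonpos) (auto intro: rtrancl_into_rtrancl)
    ultimately show False by simp
  qed
  then show ?thesis using walk_if_rtrancl by fastforce
qed

lemma flow_decomposition:
  assumes "s \<noteq> t" "finite F" "F \<subseteq> E"
    and "\<And>v. v \<noteq> s \<Longrightarrow> v \<noteq> t \<Longrightarrow> net_flow src dst F v = 0" and "int k \<le> net_flow src dst F s"
  shows "\<exists>Q. path_packing E src dst s t Q \<and> card Q = k \<and> (\<forall>q\<in>Q. set q \<subseteq> F)"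
  using assms(2-)
proof (induction k arbitrary: F)
  case 0
  then show ?case by (intro exI[of _ "{}"]) (auto simp: path_packing_def)
next
  case (Suc k)
  obtain es where es: "walk src dst (\<lambda>e. e \<in> F) s es t"
    using walk_if_net_flow_positive[of F s t src dst] Suc.prems by fastforce
  obtain q where q: "walk src dst (\<lambda>e. e \<in> F) s q t" "distinct (s # map dst q)"
    using walk_contains_path[OF es] by blast
  have qF: "set q \<subseteq> F" using walk_edge_ok[OF q(1)] by auto
  have "q \<noteq> []" using q(1) \<open>s \<noteq> t\<close> by auto
  moreover have "walk src dst (\<lambda>e. e \<in> E) s q t"
    using walk_mono[OF q(1), of "\<lambda>e. e \<in> E"] Suc.prems(2) by auto
  ultimately have q_path: "is_path E src dst s t q" using q(2) is_path_iff_walk by blast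
  have "distinct q" using q(2) by (auto simp: distinct_map)
  then have net_q: "net_flow src dst (set q) v = (if s = v then 1 else 0) - (if t = v then 1 else 0)" for v
    using net_flow_walk[OF q(1)] by blast
  obtain Q where Q: "path_packing E src dst s t Q" "card Q = k" "\<forall>q'\<in>Q. set q' \<subseteq> F - set q"
    using Suc.IH[of "F - set q"] Suc.prems qF net_q \<open>s \<noteq> t\<close> by (auto simp: net_flow_diff)
  have "q \<notin> Q" using Q(3) \<open>q \<noteq> []\<close> by (cases q) auto
  then have "path_packing E src dst s t (insert q Q) \<and> card (insert q Q) = Suc k"
    using Q q_path unfolding path_packing_def by auto
  then show ?case using Q(3) qF by blast
qed

section \<open>Join-irreducible monotone tuples\<close>

definition step_tuple :: "nat \<Rightarrow> 'a \<Rightarrow> 'a \<Rightarrow> nat \<Rightarrow> 'a list" where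
  "step_tuple i a b k = map (\<lambda>j. if j < i then a else b) [0..<k]"

lemma length_step_tuple [simp]: "length (step_tuple i a b k) = k"
  unfolding step_tuple_def by simp

lemma nth_step_tuple [simp]: "j < k \<Longrightarrow> step_tuple i a b k ! j = (if j < i then a else b)"
  unfolding step_tuple_def by simp

lemma step_tuple_eq_replicate: "i \<le> k \<Longrightarrow> step_tuple i a b k = replicate i a @ replicate (k - i) b"
  by (rule nth_equalityI) (auto simp: nth_append)

lemma map2_step_tuple: "map2 f (step_tuple i a b k) (step_tuple i c d k) = step_tuple i (f a c) (f b d) k"
  by (rule nth_equalityI) auto

locale join_semilattice_bot =
  fixes A :: "'a set" and le :: "'a \<Rightarrow> 'a \<Rightarrow> bool" and join :: "'a \<Rightarrow> 'a \<Rightarrow> 'a" and bot :: 'a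
  assumes refl: "x \<in> A \<Longrightarrow> le x x"
    and antisym: "x \<in> A \<Longrightarrow> y \<in> A \<Longrightarrow> le x y \<Longrightarrow> le y x \<Longrightarrow> x = y"
    and trans: "x \<in> A \<Longrightarrow> y \<in> A \<Longrightarrow> z \<in> A \<Longrightarrow> le x y \<Longrightarrow> le y z \<Longrightarrow> le x z"
    and join_closed: "x \<in> A \<Longrightarrow> y \<in> A \<Longrightarrow> join x y \<in> A"
    and join_upper1: "x \<in> A \<Longrightarrow> y \<in> A \<Longrightarrow> le x (join x y)"
    and join_upper2: "x \<in> A \<Longrightarrow> y \<in> A \<Longrightarrow> le y (join x y)"
    and join_least: "x \<in> A \<Longrightarrow> y \<in> A \<Longrightarrow> z \<in> A \<Longrightarrow> le x z \<Longrightarrow> le y z \<Longrightarrow> le (join x y) z"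
    and bot_closed: "bot \<in> A"
    and bot_least: "x \<in> A \<Longrightarrow> le bot x"
begin

lemma join_absorb: "x \<in> A \<Longrightarrow> y \<in> A \<Longrightarrow> le x y \<Longrightarrow> join x y = y"
  by (meson antisym join_closed join_least join_upper2 refl)

lemma join_commute: "x \<in> A \<Longrightarrow> y \<in> A \<Longrightarrow> join x y = join y x"
  by (meson antisym join_closed join_least join_upper1 join_upper2)

lemma join_bot_bot: "join bot bot = bot"
  using join_absorb bot_closed refl by blast

lemma le_bot_iff: "x \<in> A \<Longrightarrow> le x bot \<longleftrightarrow> x = bot"
  using antisym bot_closed bot_least refl by blast

abbreviation irreducible :: "'a \<Rightarrow> bool" where
  "irreducible \<equiv> join_irreducible A le join"

definition mono_tuples :: "nat \<Rightarrow> 'a list set" where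
  "mono_tuples k = {xs. length xs = k \<and> set xs \<subseteq> A \<and> (\<forall>i j. i < j \<and> j < k \<longrightarrow> le (xs ! i) (xs ! j))}"

definition tuple_le :: "'a list \<Rightarrow> 'a list \<Rightarrow> bool" where
  "tuple_le xs ys \<longleftrightarrow> length xs = length ys \<and> (\<forall>i<length xs. le (xs ! i) (ys ! i))"

abbreviation tuple_irreducible :: "nat \<Rightarrow> 'a list \<Rightarrow> bool" where
  "tuple_irreducible k \<equiv> join_irreducible (mono_tuples k) tuple_le (map2 join)"

lemma mono_tuples_length: "xs \<in> mono_tuples k \<Longrightarrow> length xs = k"
  unfolding mono_tuples_def by simp

lemma mono_tuples_nth: "xs \<in> mono_tuples k \<Longrightarrow> j < k \<Longrightarrow> xs ! j \<in> A"
  unfolding mono_tuples_def by auto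

lemma mono_tuples_mono: "xs \<in> mono_tuples k \<Longrightarrow> i \<le> j \<Longrightarrow> j < k \<Longrightarrow> le (xs ! i) (xs ! j)"
  using refl[OF mono_tuples_nth] unfolding mono_tuples_def by (cases "i = j") auto

lemma mono_tuplesI:
  assumes "length xs = k" "\<And>j. j < k \<Longrightarrow> xs ! j \<in> A"
    and "\<And>i j. i < j \<Longrightarrow> j < k \<Longrightarrow> le (xs ! i) (xs ! j)"
  shows "xs \<in> mono_tuples k"
  using assms unfolding mono_tuples_def by (auto simp: in_set_conv_nth)

lemma step_tuple_in_mono_tuples:
  "a \<in> A \<Longrightarrow> b \<in> A \<Longrightarrow> le a b \<Longrightarrow> step_tuple i a b k \<in> mono_tuples k"
  by (rule mono_tuplesI) (auto intro: refl)

lemma bot_step_tuple_in_mono_tuples: "p \<in> A \<Longrightarrow> step_tuple i bot p k \<in> mono_tuples k"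
  by (simp add: bot_closed bot_least step_tuple_in_mono_tuples)

lemma nth_map2_join: "xs \<in> mono_tuples k \<Longrightarrow> ys \<in> mono_tuples k \<Longrightarrow> j < k \<Longrightarrow>
    map2 join xs ys ! j = join (xs ! j) (ys ! j)"
  by (simp add: mono_tuples_length)

lemma map2_join_commute: "xs \<in> mono_tuples k \<Longrightarrow> ys \<in> mono_tuples k \<Longrightarrow> map2 join xs ys = map2 join ys xs"
  by (rule nth_equalityI) (auto simp: mono_tuples_length join_commute mono_tuples_nth)

lemma eq_step_tuple_if_join_eq:
  assumes "i < k" "p \<in> A" and ys: "ys \<in> mono_tuples k" and zs: "zs \<in> mono_tuples k"
    and join: "map2 join ys zs = step_tuple i bot p k" and at_i: "ys ! i = p"
  shows "ys = step_tuple i bot p k"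
proof (rule nth_equalityI)
  show "length ys = length (step_tuple i bot p k)" using ys by (simp add: mono_tuples_length)
next
  fix j assume "j < length ys"
  then have j: "j < k" using ys by (simp add: mono_tuples_length)
  have yj: "ys ! j \<in> A" using mono_tuples_nth[OF ys j] .
  have "le (ys ! j) (step_tuple i bot p k ! j)"
    using join_upper1[OF yj mono_tuples_nth[OF zs j]] join nth_map2_join[OF ys zs j] by metis
  moreover have "le p (ys ! j)" if "i \<le> j" using mono_tuples_mono[OF ys that j] at_i by simp
  ultimately show "ys ! j = step_tuple i bot p k ! j"
    using j yj assms(2) antisym le_bot_iff by (auto split: if_splits)
qed

lemma tuple_irreducible_step_tuple:
  assumes p: "irreducible p" and i: "i < k"
  shows "tuple_irreducible k (step_tuple i bot p k)"
proof -
  let ?x = "step_tuple i bot p k"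
  have pA: "p \<in> A" and p_not_least: "\<not> (\<forall>y\<in>A. le p y)"
    and p_irr: "\<And>a b. a \<in> A \<Longrightarrow> b \<in> A \<Longrightarrow> join a b = p \<Longrightarrow> a = p \<or> b = p"
    using p unfolding join_irreducible_def by blast+
  have "\<not> tuple_le ?x (step_tuple i bot bot k)"
  proof
    assume "tuple_le ?x (step_tuple i bot bot k)"
    then have "le p bot" using i unfolding tuple_le_def by auto
    then show False using p_not_least le_bot_iff[OF pA] bot_least by simp
  qed
  moreover have "step_tuple i bot bot k \<in> mono_tuples k"
    using bot_step_tuple_in_mono_tuples bot_closed by blast
  moreover have "ys = ?x \<or> zs = ?x"
    if ys: "ys \<in> mono_tuples k" and zs: "zs \<in> mono_tuples k" and join: "map2 join ys zs = ?x" for ys zs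
  proof -
    have "join (ys ! i) (zs ! i) = p" using join nth_map2_join[OF ys zs i] i by simp
    then have "ys ! i = p \<or> zs ! i = p" using p_irr mono_tuples_nth ys zs i by blast
    moreover have "map2 join zs ys = ?x" using join map2_join_commute[OF ys zs] by simp
    ultimately show ?thesis using eq_step_tuple_if_join_eq[OF i pA] ys zs join by blast
  qed
  ultimately show ?thesis
    unfolding join_irreducible_def using bot_step_tuple_in_mono_tuples[OF pA] by blast
qed

lemma irreducible_if_tuple_irreducible_step_tuple:
  assumes x: "tuple_irreducible k (step_tuple i bot p k)" and i: "i < k"
  shows "irreducible p"
proof -
  let ?x = "step_tuple i bot p k"
  have xU: "?x \<in> mono_tuples k" and x_not_least: "\<not> (\<forall>y\<in>mono_tuples k. tuple_le ?x y)"
    and x_irr: "\<And>ys zs. ys \<in> mono_tuples k \<Longrightarrow> zs \<in> mono_tuples k \<Longrightarrow> ys \<noteq> ?x \<Longrightarrow> zs \<noteq> ?x \<Longrightarrow>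
      map2 join ys zs \<noteq> ?x"
    using x unfolding join_irreducible_def by blast+
  have pA: "p \<in> A" using mono_tuples_nth[OF xU i] i by simp
  have "\<not> (\<forall>y\<in>A. le p y)"
  proof
    assume "\<forall>y\<in>A. le p y"
    then have "tuple_le ?x ys" if "ys \<in> mono_tuples k" for ys
      using that mono_tuples_nth[OF that] bot_least by (auto simp: tuple_le_def mono_tuples_length)
    then show False using x_not_least by blast
  qed
  moreover have "a = p \<or> b = p" if ab: "a \<in> A" "b \<in> A" "join a b = p" for a b
  proof -
    have "map2 join (step_tuple i bot a k) (step_tuple i bot b k) = ?x"
      using ab(3) by (simp add: map2_step_tuple join_bot_bot)
    then have "step_tuple i bot a k = ?x \<or> step_tuple i bot b k = ?x"
      using x_irr bot_step_tuple_in_mono_tuples ab(1,2) by blast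
    then show ?thesis using i by (metis nth_step_tuple less_irrefl)
  qed
  ultimately show ?thesis unfolding join_irreducible_def using pA by blast
qed

lemma mono_tuple_split:
  assumes xs: "xs \<in> mono_tuples k" and i: "i < k" and below: "\<And>j. j < i \<Longrightarrow> xs ! j = bot"
  defines "zs \<equiv> map (\<lambda>j. if j \<le> i then bot else xs ! j) [0..<k]"
  shows "zs \<in> mono_tuples k" and "map2 join (step_tuple i bot (xs ! i) k) zs = xs"
proof -
  have nth_zs: "j < k \<Longrightarrow> zs ! j = (if j \<le> i then bot else xs ! j)" for j
    unfolding zs_def by simp
  show "zs \<in> mono_tuples k"
  proof (rule mono_tuplesI)
    show "length zs = k" unfolding zs_def by simp
    show "j < k \<Longrightarrow> zs ! j \<in> A" for j using nth_zs mono_tuples_nth[OF xs] bot_closed by simp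
    show "le (zs ! a) (zs ! b)" if "a < b" "b < k" for a b
      using that nth_zs mono_tuples_mono[OF xs, of a b] mono_tuples_nth[OF xs] bot_least refl[OF bot_closed]
      by auto
  qed
  show "map2 join (step_tuple i bot (xs ! i) k) zs = xs"
  proof (rule nth_equalityI)
    show "length (map2 join (step_tuple i bot (xs ! i) k) zs) = length xs"
      using xs unfolding zs_def by (simp add: mono_tuples_length)
  next
    fix j assume "j < length (map2 join (step_tuple i bot (xs ! i) k) zs)"
    then have j: "j < k" unfolding zs_def by simp
    have xi: "xs ! i \<in> A" and xj: "xs ! j \<in> A" using mono_tuples_nth[OF xs] i j by auto
    consider "j < i" | "j = i" | "i < j" by linarith
    then show "map2 join (step_tuple i bot (xs ! i) k) zs ! j = xs ! j"
    proof cases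
      case 1
      then show ?thesis using j nth_zs below join_bot_bot unfolding zs_def by simp
    next
      case 2
      then show ?thesis
        using j nth_zs join_commute[OF xi bot_closed] join_absorb[OF bot_closed xi bot_least[OF xi]]
        unfolding zs_def by simp
    next
      case 3
      then show ?thesis using j nth_zs join_absorb[OF xi xj mono_tuples_mono[OF xs _ j, of i]]
        unfolding zs_def by simp
    qed
  qed
qed

lemma step_tuple_if_tuple_irreducible:
  assumes x: "tuple_irreducible k x"
  shows "\<exists>i<k. \<exists>p. irreducible p \<and> x = step_tuple i bot p k"
proof -
  have xU: "x \<in> mono_tuples k" and x_not_least: "\<not> (\<forall>y\<in>mono_tuples k. tuple_le x y)"
    and x_irr: "\<And>ys zs. ys \<in> mono_tuples k \<Longrightarrow> zs \<in> mono_tuples k \<Longrightarrow> ys \<noteq> x \<Longrightarrow> zs \<noteq> x \<Longrightarrow>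
      map2 join ys zs \<noteq> x"
    using x unfolding join_irreducible_def by blast+
  have "\<exists>j<k. x ! j \<noteq> bot"
  proof (rule ccontr)
    assume "\<not> (\<exists>j<k. x ! j \<noteq> bot)"
    then have "tuple_le x ys" if "ys \<in> mono_tuples k" for ys
      using that xU mono_tuples_nth[OF that] bot_least by (auto simp: tuple_le_def mono_tuples_length)
    then show False using x_not_least by blast
  qed
  define i where "i = (LEAST j. j < k \<and> x ! j \<noteq> bot)"
  have i: "i < k" "x ! i \<noteq> bot"
    using LeastI_ex[OF \<open>\<exists>j<k. x ! j \<noteq> bot\<close>] unfolding i_def by auto
  have below: "x ! j = bot" if "j < i" for j
    using not_less_Least[OF that[unfolded i_def]] that i(1) by auto
  define zs where "zs = map (\<lambda>j. if j \<le> i then bot else x ! j) [0..<k]"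
  have zs: "zs \<in> mono_tuples k" "map2 join (step_tuple i bot (x ! i) k) zs = x"
    using mono_tuple_split[OF xU i(1) below] unfolding zs_def by blast+
  have "zs ! i = bot" using i unfolding zs_def by simp
  then have "zs \<noteq> x" using i(2) by auto
  then have "step_tuple i bot (x ! i) k = x"
    using x_irr[OF bot_step_tuple_in_mono_tuples[OF mono_tuples_nth[OF xU i(1)]] zs(1)] zs(2) by blast
  then show ?thesis
    using irreducible_if_tuple_irreducible_step_tuple[of k i "x ! i"] x i(1) by metis
qed

theorem tuple_irreducible_iff:
  "tuple_irreducible k x \<longleftrightarrow> (\<exists>i<k. \<exists>p. irreducible p \<and> x = step_tuple i bot p k)"
  using step_tuple_if_tuple_irreducible tuple_irreducible_step_tuple by blast

lemma card_tuple_irreducibles_le: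
  assumes "finite {p. irreducible p}"
  shows "card {x. tuple_irreducible k x} \<le> k * card {p. irreducible p}"
proof -
  have "{x. tuple_irreducible k x} = (\<Union>i<k. (\<lambda>p. step_tuple i bot p k) ` {p. irreducible p})"
    using tuple_irreducible_iff by blast
  then have "card {x. tuple_irreducible k x} \<le>
      (\<Sum>i<k. card ((\<lambda>p. step_tuple i bot p k) ` {p. irreducible p}))"
    by (simp add: card_UN_le)
  also have "\<dots> \<le> (\<Sum>i<k. card {p. irreducible p})"
    by (intro sum_mono card_image_le assms)
  finally show ?thesis by simp
qed

end

section \<open>Minimum cuts of a maximum path packing\<close>

lemma cut_le_iff_split:
  "cut_le E src dst s t X Y \<longleftrightarrow>
     (\<forall>q. is_path E src dst s t q \<longrightarrow> (\<exists>as e bs. q = as @ e # bs \<and> e \<in> X \<and> set as \<inter> Y = {}))"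
  unfolding cut_le_def ex_nth_before_iff_split ..

locale st_max_packing =
  fixes V E :: "nat set" and src dst :: "nat \<Rightarrow> nat" and s t :: nat and P :: "nat list set"
  assumes digraph: "digraph V E src dst" and s_ne_t: "s \<noteq> t"
    and max_packing: "max_path_packing E src dst s t P"
begin

abbreviation walkE :: "nat \<Rightarrow> nat list \<Rightarrow> nat \<Rightarrow> bool" where
  "walkE \<equiv> walk src dst (\<lambda>e. e \<in> E)"

abbreviation L :: "nat set set" where
  "L \<equiv> min_cuts E src dst s t"

abbreviation le_L :: "nat set \<Rightarrow> nat set \<Rightarrow> bool" where
  "le_L \<equiv> cut_le E src dst s t"

definition packed_edges :: "nat set" where
  "packed_edges = (\<Union>p\<in>P. set p)"

lemma finite_E: "finite E" and finite_V: "finite V"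
  using digraph unfolding digraph_def by auto

lemma finite_P: "finite P"
  using max_packing unfolding max_path_packing_def path_packing_def by auto

lemma is_path_packing: "p \<in> P \<Longrightarrow> is_path E src dst s t p"
  using max_packing unfolding max_path_packing_def path_packing_def by auto

lemma packing_disjoint: "p \<in> P \<Longrightarrow> q \<in> P \<Longrightarrow> p \<noteq> q \<Longrightarrow> set p \<inter> set q = {}"
  using max_packing unfolding max_path_packing_def path_packing_def by auto

lemma card_packing_le: "path_packing E src dst s t Q \<Longrightarrow> card Q \<le> card P"
  using max_packing unfolding max_path_packing_def by auto

lemma walk_path: "is_path E src dst s t q \<Longrightarrow> walkE s q t"
  using is_path_iff_walk by blast

lemma walk_packing: "p \<in> P \<Longrightarrow> walkE s p t"
  using is_path_packing walk_path by blast

lemma distinct_packing: "p \<in> P \<Longrightarrow> distinct p"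
  using is_path_packing unfolding is_path_def by (auto simp: distinct_map)

lemma packing_subset_E: "p \<in> P \<Longrightarrow> set p \<subseteq> E"
  using is_path_packing unfolding is_path_def by auto

lemma packed_edges_subset_E: "packed_edges \<subseteq> E"
  using packing_subset_E unfolding packed_edges_def by auto

lemma finite_packed_edges: "finite packed_edges"
  using packed_edges_subset_E finite_E finite_subset by auto

lemma cut_meets_walk:
  assumes "is_cut E src dst s t X" "walkE s es t"
  shows "set es \<inter> X \<noteq> {}"
proof -
  obtain q where q: "walkE s q t" "set q \<subseteq> set es" "distinct (s # map dst q)"
    using walk_contains_path[OF assms(2)] by blast
  have "q \<noteq> []" using q(1) s_ne_t by auto
  then have "is_path E src dst s t q" using q is_path_iff_walk by blast
  then have "set q \<inter> X \<noteq> {}" using assms(1) unfolding is_cut_def by blast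
  then show ?thesis using q(2) by blast
qed

lemma card_packing_le_cut:
  assumes "is_cut E src dst s t Y"
  shows "card P \<le> card Y"
proof -
  have fin: "finite Y" using assms finite_E finite_subset unfolding is_cut_def by auto
  have "Y \<inter> set p \<noteq> {}" if "p \<in> P" for p
    using that assms is_path_packing unfolding is_cut_def by auto
  then have "card P \<le> (\<Sum>p\<in>P. card (Y \<inter> set p))"
    using fin sum_mono[of P "\<lambda>_. 1::nat"] by (auto simp: Suc_leI card_gt_0_iff)
  also have "\<dots> = card (\<Union>p\<in>P. Y \<inter> set p)"
    by (rule card_UN_disjoint[symmetric]) (use finite_P fin packing_disjoint in auto)
  also have "\<dots> \<le> card Y" using fin by (intro card_mono) auto
  finally show ?thesis .
qed

text \<open>The residual graph of the packing: an arc \<open>(e, True)\<close> runs forward along an unpacked edge,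
  an arc \<open>(e, False)\<close> backward along a packed one.\<close>

definition res_src :: "nat \<times> bool \<Rightarrow> nat" where
  "res_src a = (if snd a then src (fst a) else dst (fst a))"

definition res_dst :: "nat \<times> bool \<Rightarrow> nat" where
  "res_dst a = (if snd a then dst (fst a) else src (fst a))"

definition res_arc :: "nat \<times> bool \<Rightarrow> bool" where
  "res_arc a \<longleftrightarrow> fst a \<in> E \<and> (snd a \<longleftrightarrow> fst a \<notin> packed_edges)"

definition res_reach :: "nat set" where
  "res_reach = {v. (s, v) \<in> {(res_src a, res_dst a) | a. res_arc a}\<^sup>*}"

fun augment :: "(nat \<times> bool) list \<Rightarrow> nat set \<Rightarrow> nat set" where
  "augment [] F = F"
| "augment (a # r) F = (if snd a then insert (fst a) (augment r F) else augment r F - {fst a})"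

lemma augment_notin: "e \<notin> fst ` set r \<Longrightarrow> e \<in> augment r F \<longleftrightarrow> e \<in> F"
  by (induction r) auto

lemma finite_augment: "finite F \<Longrightarrow> finite (augment r F)"
  by (induction r) auto

lemma augment_subset: "F \<subseteq> E \<Longrightarrow> (\<And>a. a \<in> set r \<Longrightarrow> fst a \<in> E) \<Longrightarrow> augment r F \<subseteq> E"
  by (induction r) auto

lemma net_flow_augment:
  "walk res_src res_dst res_arc u r w \<Longrightarrow> distinct (map fst r) \<Longrightarrow>
    net_flow src dst (augment r packed_edges) v =
      net_flow src dst packed_edges v + (if u = v then 1 else 0) - (if w = v then 1 else 0)"
proof (induction r arbitrary: u)
  case (Cons a r)
  then have IH: "net_flow src dst (augment r packed_edges) v =
      net_flow src dst packed_edges v + (if res_dst a = v then 1 else 0) - (if w = v then 1 else 0)"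
    and a: "res_arc a" "res_src a = u" and fresh: "fst a \<notin> fst ` set r" by auto
  have fin: "finite (augment r packed_edges)" using finite_augment finite_packed_edges by auto
  show ?case
  proof (cases "snd a")
    case True
    then have "fst a \<notin> augment r packed_edges" using a augment_notin[OF fresh] unfolding res_arc_def by auto
    then have "net_flow src dst (augment (a # r) packed_edges) v =
        net_flow src dst (augment r packed_edges) v + net_flow src dst {fst a} v"
      using True net_flow_insert[OF fin] by simp
    then show ?thesis using IH a True unfolding res_src_def res_dst_def by (simp add: net_flow_singleton)
  next
    case False
    then have "fst a \<in> augment r packed_edges" using a augment_notin[OF fresh] unfolding res_arc_def by auto
    then have "net_flow src dst (augment (a # r) packed_edges) v =
        net_flow src dst (augment r packed_edges) v - net_flow src dst {fst a} v"
      using False net_flow_diff[OF fin, of "{fst a}"] by simp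
    then show ?thesis using IH a False unfolding res_src_def res_dst_def by (simp add: net_flow_singleton)
  qed
qed simp

lemma net_flow_packed_edges:
  "net_flow src dst packed_edges v = int (card P) * ((if s = v then 1 else 0) - (if t = v then 1 else 0))"
proof -
  have "net_flow src dst packed_edges v = (\<Sum>p\<in>P. net_flow src dst (set p) v)"
    unfolding packed_edges_def by (rule net_flow_UN) (use finite_P packing_disjoint in auto)
  also have "\<dots> = (\<Sum>p\<in>P. (if s = v then 1 else 0) - (if t = v then 1 else 0))"
  proof (rule sum.cong)
    fix p assume "p \<in> P"
    then show "net_flow src dst (set p) v = (if s = v then 1 else 0) - (if t = v then 1 else 0)"
      using net_flow_walk[OF walk_packing distinct_packing] by blast
  qed simp
  finally show ?thesis by simp
qed

text \<open>An augmenting path would yield a flow of value \<open>card P + 1\<close>, hence by flow decomposition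
  more edge-disjoint paths than the maximum packing has.\<close>

lemma t_notin_res_reach: "t \<notin> res_reach"
proof
  assume "t \<in> res_reach"
  then obtain r where r: "walk res_src res_dst res_arc s r t"
    using walk_if_rtrancl unfolding res_reach_def by fastforce
  obtain r' where r': "walk res_src res_dst res_arc s r' t" "distinct (s # map res_dst r')"
    using walk_contains_path[OF r] by blast
  have arcs: "res_arc a" if "a \<in> set r'" for a using walk_edge_ok[OF r'(1) that] .
  have "inj_on fst (set r')"
  proof (rule inj_onI)
    fix a b assume "a \<in> set r'" "b \<in> set r'" "fst a = fst b"
    then have "snd a = snd b" using arcs unfolding res_arc_def by auto
    then show "a = b" using \<open>fst a = fst b\<close> by (simp add: prod_eq_iff)
  qed
  moreover have "distinct r'" using r'(2) by (auto simp: distinct_map)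
  ultimately have fresh: "distinct (map fst r')" by (simp add: distinct_map)
  define F where "F = augment r' packed_edges"
  have "finite F" unfolding F_def using finite_augment finite_packed_edges by auto
  moreover have "F \<subseteq> E"
    unfolding F_def using augment_subset[OF packed_edges_subset_E] arcs unfolding res_arc_def by auto
  moreover have "net_flow src dst F v =
      (int (card P) + 1) * ((if s = v then 1 else 0) - (if t = v then 1 else 0))" for v
    unfolding F_def using net_flow_augment[OF r'(1) fresh] net_flow_packed_edges
    by (simp add: algebra_simps)
  ultimately obtain Q where "path_packing E src dst s t Q" "card Q = card P + 1"
    using flow_decomposition[OF s_ne_t, of F E src dst "card P + 1"] s_ne_t by auto
  then show False using card_packing_le by fastforce
qed

lemma s_in_res_reach: "s \<in> res_reach"
  unfolding res_reach_def by auto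

lemma res_reach_step:
  assumes "res_arc a" "res_src a \<in> res_reach"
  shows "res_dst a \<in> res_reach"
proof -
  have "(res_src a, res_dst a) \<in> {(res_src a, res_dst a) | a. res_arc a}" using assms(1) by blast
  with assms(2) show ?thesis unfolding res_reach_def by (simp add: rtrancl_into_rtrancl)
qed

lemma res_reach_forward: "e \<in> E \<Longrightarrow> e \<notin> packed_edges \<Longrightarrow> src e \<in> res_reach \<Longrightarrow> dst e \<in> res_reach"
  using res_reach_step[of "(e, True)"] unfolding res_arc_def res_src_def res_dst_def by simp

lemma res_reach_backward: "e \<in> packed_edges \<Longrightarrow> dst e \<in> res_reach \<Longrightarrow> src e \<in> res_reach"
  using res_reach_step[of "(e, False)"] packed_edges_subset_E
  unfolding res_arc_def res_src_def res_dst_def by auto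

definition leftmost_cut :: "nat set" where
  "leftmost_cut = {e \<in> E. src e \<in> res_reach \<and> dst e \<notin> res_reach}"

lemma leftmost_cut_subset: "leftmost_cut \<subseteq> packed_edges"
  using res_reach_forward unfolding leftmost_cut_def by blast

lemma is_cut_leftmost_cut: "is_cut E src dst s t leftmost_cut"
  unfolding is_cut_def
proof (intro conjI allI impI)
  show "leftmost_cut \<subseteq> E" unfolding leftmost_cut_def by auto
  fix q assume "is_path E src dst s t q"
  then have q: "walkE s q t" using walk_path by blast
  then obtain e where "e \<in> set q" "src e \<in> res_reach" "dst e \<notin> res_reach"
    using walk_leaves_set[OF q s_in_res_reach t_notin_res_reach] by blast
  then show "set q \<inter> leftmost_cut \<noteq> {}"
    using walk_edge_ok[OF q] unfolding leftmost_cut_def by auto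
qed

lemma packed_walk_outside_res_reach:
  "walk src dst ok u es w \<Longrightarrow> u \<notin> res_reach \<Longrightarrow> set es \<subseteq> packed_edges \<Longrightarrow> e \<in> set es \<Longrightarrow> src e \<notin> res_reach"
proof (induction es arbitrary: u)
  case (Cons a es)
  then show ?case using res_reach_backward by auto
qed simp

lemma leftmost_cut_meets_packing_once:
  assumes p: "p \<in> P" and z: "z \<in> leftmost_cut" "z \<in> set p" and z': "z' \<in> leftmost_cut" "z' \<in> set p"
  shows "z = z'"
proof -
  have packed: "set p \<subseteq> packed_edges" using p unfolding packed_edges_def by auto
  have same: "x = y" if xy: "x \<in> leftmost_cut" "y \<in> leftmost_cut" "precedes p x y" for x y
  proof (rule ccontr)
    assume "x \<noteq> y"
    then obtain as bs cs where split: "p = as @ x # bs @ y # cs"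
      using precedes_strict_split[OF xy(3)] by blast
    then have "walkE (dst x) (bs @ y # cs) t"
      using walk_packing[OF p] by (simp only: walk_append_Cons)
    moreover have "dst x \<notin> res_reach" using xy(1) unfolding leftmost_cut_def by simp
    moreover have "set (bs @ y # cs) \<subseteq> packed_edges" using packed split by auto
    ultimately have "src y \<notin> res_reach" by (rule packed_walk_outside_res_reach) simp
    then show False using xy(2) unfolding leftmost_cut_def by simp
  qed
  show ?thesis using same[OF z(1) z'(1)] same[OF z'(1) z(1)] precedes_total[OF z(2) z'(2)] by auto
qed

lemma card_leftmost_cut_le: "card leftmost_cut \<le> card P"
proof -
  have "leftmost_cut = (\<Union>p\<in>P. leftmost_cut \<inter> set p)"
    using leftmost_cut_subset unfolding packed_edges_def by auto
  then have "card leftmost_cut \<le> (\<Sum>p\<in>P. card (leftmost_cut \<inter> set p))"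
    using card_UN_le[OF finite_P] by metis
  also have "\<dots> \<le> (\<Sum>p\<in>P. 1)"
    using leftmost_cut_meets_packing_once by (intro sum_mono) (simp add: card_le_Suc0_iff_eq)
  finally show ?thesis by simp
qed

lemma leftmost_cut_in_L: "leftmost_cut \<in> L"
  unfolding min_cuts_def using is_cut_leftmost_cut card_leftmost_cut_le card_packing_le_cut order_trans
  by blast

lemma is_cut_L: "X \<in> L \<Longrightarrow> is_cut E src dst s t X"
  unfolding min_cuts_def by auto

lemma finite_L: "X \<in> L \<Longrightarrow> finite X"
  using is_cut_L finite_E finite_subset unfolding is_cut_def by blast

lemma card_L:
  assumes "X \<in> L"
  shows "card X = card P"
proof -
  have "card X \<le> card leftmost_cut" using assms is_cut_leftmost_cut unfolding min_cuts_def by blast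
  then show ?thesis using card_leftmost_cut_le card_packing_le_cut[OF is_cut_L[OF assms]] by linarith
qed

lemma L_subset_packed_edges_and_card_inter:
  assumes X: "X \<in> L"
  shows "X \<subseteq> packed_edges" and "p \<in> P \<Longrightarrow> card (X \<inter> set p) = 1"
proof -
  have fin: "finite X" using finite_L X by auto
  have ge1: "1 \<le> card (X \<inter> set p)" if "p \<in> P" for p
  proof -
    have "X \<inter> set p \<noteq> {}" using that is_cut_L[OF X] is_path_packing unfolding is_cut_def by blast
    then show ?thesis using fin by (simp add: Suc_leI card_gt_0_iff)
  qed
  have sum_eq: "(\<Sum>p\<in>P. card (X \<inter> set p)) = card (X \<inter> packed_edges)"
    unfolding packed_edges_def
    by (subst card_UN_disjoint[symmetric]) (use finite_P fin packing_disjoint in auto)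
  have "card (X \<inter> packed_edges) \<le> card X" using fin by (intro card_mono) auto
  moreover have "card P \<le> (\<Sum>p\<in>P. card (X \<inter> set p))"
    using sum_mono[of P "\<lambda>_. 1::nat" "\<lambda>p. card (X \<inter> set p)"] ge1 by simp
  ultimately have sums: "(\<Sum>p\<in>P. card (X \<inter> set p)) = card P" "card (X \<inter> packed_edges) = card X"
    using sum_eq card_L[OF X] by auto
  then show "X \<subseteq> packed_edges" using card_subset_eq[OF fin, of "X \<inter> packed_edges"] by blast
  show "card (X \<inter> set p) = 1" if p: "p \<in> P"
  proof (rule ccontr)
    assume "card (X \<inter> set p) \<noteq> 1"
    then have "(\<Sum>p\<in>P. 1) < (\<Sum>p\<in>P. card (X \<inter> set p))"
      using sum_strict_mono_ex1[OF finite_P, of "\<lambda>_. 1" "\<lambda>p. card (X \<inter> set p)"] ge1 p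
      by (metis le_neq_implies_less)
    then show False using sums by simp
  qed
qed

definition cut_edge :: "nat set \<Rightarrow> nat list \<Rightarrow> nat" where
  "cut_edge X p = (THE e. e \<in> X \<and> e \<in> set p)"

lemma L_inter_packing: assumes "X \<in> L" "p \<in> P" shows "X \<inter> set p = {cut_edge X p}"
proof -
  obtain e where e: "X \<inter> set p = {e}"
    using L_subset_packed_edges_and_card_inter(2)[OF assms] card_1_singletonE by blast
  then have "cut_edge X p = e" unfolding cut_edge_def by (intro the_equality) auto
  then show ?thesis using e by simp
qed

lemma cut_edge_in: "X \<in> L \<Longrightarrow> p \<in> P \<Longrightarrow> cut_edge X p \<in> X \<and> cut_edge X p \<in> set p"
  using L_inter_packing by blast

lemma cut_edge_unique: "X \<in> L \<Longrightarrow> p \<in> P \<Longrightarrow> e \<in> X \<Longrightarrow> e \<in> set p \<Longrightarrow> e = cut_edge X p"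
  using L_inter_packing by blast

lemma packed_edge_on_path: "e \<in> packed_edges \<Longrightarrow> \<exists>p\<in>P. e \<in> set p"
  unfolding packed_edges_def by auto

lemma L_eq_image_cut_edge:
  assumes X: "X \<in> L"
  shows "X = (\<lambda>p. cut_edge X p) ` P"
proof
  show "X \<subseteq> (\<lambda>p. cut_edge X p) ` P"
  proof
    fix e assume "e \<in> X"
    then obtain p where "p \<in> P" "e \<in> set p"
      using L_subset_packed_edges_and_card_inter(1)[OF X] packed_edge_on_path by blast
    then show "e \<in> (\<lambda>p. cut_edge X p) ` P" using cut_edge_unique[OF X] \<open>e \<in> X\<close> by blast
  qed
  show "(\<lambda>p. cut_edge X p) ` P \<subseteq> X" using cut_edge_in[OF X] by auto
qed

lemma L_eqI: "X \<in> L \<Longrightarrow> Y \<in> L \<Longrightarrow> (\<And>p. p \<in> P \<Longrightarrow> cut_edge X p = cut_edge Y p) \<Longrightarrow> X = Y"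
  using L_eq_image_cut_edge by (metis image_cong)

text \<open>A walk from \<open>s\<close> avoiding a minimum cut \<open>Y\<close> can neither reach an edge of a packed path behind
  the edge of \<open>Y\<close> nor leave from one before it: splicing it with the rest of that path would give
  an \<open>s\<close>-\<open>t\<close> walk missing \<open>Y\<close>.\<close>

lemma no_avoiding_walk_to_later_edge:
  assumes Y: "Y \<in> L" and p: "p \<in> P" and f: "precedes p (cut_edge Y p) f" "f \<noteq> cut_edge Y p"
    and w: "walkE s w (src f)" "set w \<inter> Y = {}"
  shows False
proof -
  define y where "y = cut_edge Y p"
  have Yp: "Y \<inter> set p = {y}" and "f \<noteq> y" using L_inter_packing[OF Y p] f(2) unfolding y_def by auto
  obtain as bs cs where split: "p = as @ y # bs @ f # cs"
    using precedes_strict_split[OF f(1)[folded y_def]] \<open>f \<noteq> y\<close> by blast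
  have "walkE s ((as @ y # bs) @ f # cs) t" using walk_packing[OF p] split by simp
  then have "walkE s (w @ f # cs) t" using w(1) by (simp only: walk_append_Cons)
  moreover have "y \<notin> set (f # cs)" using distinct_packing[OF p] split \<open>f \<noteq> y\<close> by auto
  then have "set (f # cs) \<inter> Y = {}" using Yp split by auto
  moreover have "set (w @ f # cs) \<inter> Y \<noteq> {}" by (rule cut_meets_walk[OF is_cut_L[OF Y]]) fact
  ultimately show False using w(2) by auto
qed

lemma no_avoiding_walk_from_earlier_edge:
  assumes Y: "Y \<in> L" and p: "p \<in> P" and e: "precedes p e (cut_edge Y p)" "e \<noteq> cut_edge Y p"
    and w: "walkE (dst e) w t" "set w \<inter> Y = {}"
  shows False
proof -
  define y where "y = cut_edge Y p"
  have Yp: "Y \<inter> set p = {y}" and "e \<noteq> y" using L_inter_packing[OF Y p] e(2) unfolding y_def by auto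
  obtain as bs cs where split: "p = as @ e # bs @ y # cs"
    using precedes_strict_split[OF e(1)[folded y_def]] \<open>e \<noteq> y\<close> by blast
  have "walkE s (as @ e # bs @ y # cs) t" using walk_packing[OF p] split by simp
  then have "walkE s (as @ e # w) t" using w(1) by (simp only: walk_append_Cons)
  moreover have "y \<notin> set (as @ [e])" using distinct_packing[OF p] split \<open>e \<noteq> y\<close> by auto
  then have "set (as @ [e]) \<inter> Y = {}" using Yp split by auto
  moreover have "set (as @ e # w) \<inter> Y \<noteq> {}" by (rule cut_meets_walk[OF is_cut_L[OF Y]]) fact
  ultimately show False using w(2) by auto
qed

lemma precedes_cut_edge_if_le_L:
  assumes X: "X \<in> L" and Y: "Y \<in> L" and le: "le_L X Y" and p: "p \<in> P"
  shows "precedes p (cut_edge X p) (cut_edge Y p)"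
proof -
  obtain as e bs where split: "p = as @ e # bs" "e \<in> X" "set as \<inter> Y = {}"
    using le is_path_packing[OF p] unfolding cut_le_iff_split by blast
  have "cut_edge Y p \<in> set p" "cut_edge Y p \<in> Y" using cut_edge_in[OF Y p] by auto
  then have "cut_edge Y p \<in> set (e # bs)" using split(1,3) by auto
  then have "precedes p e (cut_edge Y p)" using split(1) unfolding precedes_def by blast
  moreover have "e \<in> set p" using split(1) by simp
  then have "e = cut_edge X p" using cut_edge_unique[OF X p split(2)] by blast
  ultimately show ?thesis by simp
qed

lemma le_L_if_precedes_cut_edge:
  assumes X: "X \<in> L" and Y: "Y \<in> L" and prec: "\<And>p. p \<in> P \<Longrightarrow> precedes p (cut_edge X p) (cut_edge Y p)"
  shows "le_L X Y"
  unfolding cut_le_iff_split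
proof (intro allI impI)
  fix q assume q: "is_path E src dst s t q"
  have "set q \<inter> X \<noteq> {}" using q is_cut_L[OF X] unfolding is_cut_def by blast
  then obtain as e bs where split: "q = as @ e # bs" "e \<in> X" "set as \<inter> X = {}"
    using split_list_first_hit[of q X] by blast
  have "set as \<inter> Y = {}"
  proof (rule ccontr)
    assume "set as \<inter> Y \<noteq> {}"
    then obtain f where "f \<in> set as" "f \<in> Y" by blast
    then obtain as1 as2 where as: "as = as1 @ f # as2" using split_list by metis
    obtain p where p: "p \<in> P" "f \<in> set p"
      using packed_edge_on_path L_subset_packed_edges_and_card_inter(1)[OF Y] \<open>f \<in> Y\<close> by blast
    have "f = cut_edge Y p" using cut_edge_unique[OF Y p(1) \<open>f \<in> Y\<close> p(2)] .
    then have "precedes p (cut_edge X p) f" using prec p(1) by simp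
    moreover have "f \<noteq> cut_edge X p" using \<open>f \<in> set as\<close> split(3) cut_edge_in[OF X p(1)] by auto
    moreover have "walkE s (as1 @ f # (as2 @ e # bs)) t" using walk_path[OF q] split(1) as by simp
    then have "walkE s as1 (src f)" by (simp only: walk_append_Cons)
    moreover have "set as1 \<inter> X = {}" using split(3) as by auto
    ultimately show False using no_avoiding_walk_to_later_edge[OF X p(1)] by blast
  qed
  then show "\<exists>as e bs. q = as @ e # bs \<and> e \<in> X \<and> set as \<inter> Y = {}" using split by blast
qed

lemma le_L_iff_precedes:
  "X \<in> L \<Longrightarrow> Y \<in> L \<Longrightarrow> le_L X Y \<longleftrightarrow> (\<forall>p\<in>P. precedes p (cut_edge X p) (cut_edge Y p))"
  using precedes_cut_edge_if_le_L le_L_if_precedes_cut_edge by blast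

lemma le_L_refl: "X \<in> L \<Longrightarrow> le_L X X"
  by (simp add: le_L_iff_precedes precedes_refl cut_edge_in)

lemma le_L_trans:
  assumes "X \<in> L" "Y \<in> L" "Z \<in> L" "le_L X Y" "le_L Y Z"
  shows "le_L X Z"
  using assms precedes_trans[OF distinct_packing] by (simp add: le_L_iff_precedes) blast

lemma le_L_antisym:
  assumes "X \<in> L" "Y \<in> L" "le_L X Y" "le_L Y X"
  shows "X = Y"
  using assms precedes_antisym[OF distinct_packing] by (intro L_eqI) (auto simp: le_L_iff_precedes)

section \<open>Joins and meets of minimum cuts\<close>

lemma cut_edge_later_in: "X \<in> L \<Longrightarrow> Y \<in> L \<Longrightarrow> p \<in> P \<Longrightarrow> later p (cut_edge X p) (cut_edge Y p) \<in> set p"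
  unfolding later_def using cut_edge_in by auto

lemma cut_edge_earlier_in: "X \<in> L \<Longrightarrow> Y \<in> L \<Longrightarrow> p \<in> P \<Longrightarrow> earlier p (cut_edge X p) (cut_edge Y p) \<in> set p"
  unfolding earlier_def using cut_edge_in by auto

lemma L_union_inter_packing:
  "X \<in> L \<Longrightarrow> Y \<in> L \<Longrightarrow> p \<in> P \<Longrightarrow> set p \<inter> (X \<union> Y) = {cut_edge X p, cut_edge Y p}"
  using L_inter_packing by blast

lemma cut_join_eq_image:
  "X \<in> L \<Longrightarrow> Y \<in> L \<Longrightarrow> cut_join P X Y = (\<lambda>p. later p (cut_edge X p) (cut_edge Y p)) ` P"
  unfolding cut_join_def S_max_def
  using filter_last_hd_eq_later_earlier(1)[OF distinct_packing L_union_inter_packing]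
  by (intro image_cong) auto

lemma cut_meet_eq_image:
  "X \<in> L \<Longrightarrow> Y \<in> L \<Longrightarrow> cut_meet P X Y = (\<lambda>p. earlier p (cut_edge X p) (cut_edge Y p)) ` P"
  unfolding cut_meet_def S_min_def
  using filter_last_hd_eq_later_earlier(2)[OF distinct_packing L_union_inter_packing]
  by (intro image_cong) auto

lemma image_in_L:
  assumes g: "\<And>p. p \<in> P \<Longrightarrow> g p \<in> set p" and cut: "is_cut E src dst s t (g ` P)"
  shows "g ` P \<in> L" and "p \<in> P \<Longrightarrow> cut_edge (g ` P) p = g p"
proof -
  have "card (g ` P) \<le> card Y" if "is_cut E src dst s t Y" for Y
    using card_image_le[OF finite_P, of g] card_packing_le_cut[OF that] by linarith
  then show gL: "g ` P \<in> L" unfolding min_cuts_def using cut by blast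
  show "cut_edge (g ` P) p = g p" if "p \<in> P"
    using cut_edge_unique[OF gL that imageI[OF that] g[OF that]] by simp
qed

lemma is_cut_later_image:
  assumes X: "X \<in> L" and Y: "Y \<in> L"
  shows "is_cut E src dst s t ((\<lambda>p. later p (cut_edge X p) (cut_edge Y p)) ` P)"
    (is "is_cut _ _ _ _ _ ?W")
  unfolding is_cut_def
proof (intro conjI allI impI)
  show "?W \<subseteq> E" using cut_edge_later_in[OF X Y] packing_subset_E by blast
  fix q assume q: "is_path E src dst s t q"
  show "set q \<inter> ?W \<noteq> {}"
  proof
    assume avoid: "set q \<inter> ?W = {}"
    have "set q \<inter> (X \<union> Y) \<noteq> {}" using q is_cut_L[OF X] unfolding is_cut_def by blast
    then obtain as e bs where split: "q = as @ e # bs" "e \<in> X \<union> Y" "set bs \<inter> (X \<union> Y) = {}"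
      using split_list_last_hit[of q "X \<union> Y"] by blast
    have "walkE s (as @ e # bs) t" using walk_path[OF q] split(1) by simp
    then have rest: "walkE (dst e) bs t" by (simp only: walk_append_Cons)
    obtain p where p: "p \<in> P" "e \<in> set p"
      using split(2) L_subset_packed_edges_and_card_inter(1)[OF X]
        L_subset_packed_edges_and_card_inter(1)[OF Y] packed_edge_on_path by blast
    have not_later: "e \<noteq> later p (cut_edge X p) (cut_edge Y p)" using avoid split(1) p(1) by auto
    show False
    proof (cases "e \<in> X")
      case True
      then have "e = cut_edge X p" using cut_edge_unique[OF X p(1) _ p(2)] by blast
      then have "precedes p e (cut_edge Y p)" "e \<noteq> cut_edge Y p"
        using not_later unfolding later_def by (auto split: if_splits)
      then show False using no_avoiding_walk_from_earlier_edge[OF Y p(1) _ _ rest] split(3) by blast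
    next
      case False
      then have "e \<in> Y" using split(2) by blast
      then have "e = cut_edge Y p" using cut_edge_unique[OF Y p(1) _ p(2)] by blast
      then have "\<not> precedes p (cut_edge X p) e" "e \<noteq> cut_edge X p"
        using not_later unfolding later_def by (auto split: if_splits)
      then have "precedes p e (cut_edge X p)" "e \<noteq> cut_edge X p"
        using precedes_total[OF p(2), of "cut_edge X p"] cut_edge_in[OF X p(1)] by auto
      then show False using no_avoiding_walk_from_earlier_edge[OF X p(1) _ _ rest] split(3) by blast
    qed
  qed
qed

lemma is_cut_earlier_image:
  assumes X: "X \<in> L" and Y: "Y \<in> L"
  shows "is_cut E src dst s t ((\<lambda>p. earlier p (cut_edge X p) (cut_edge Y p)) ` P)"
    (is "is_cut _ _ _ _ _ ?W")
  unfolding is_cut_def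
proof (intro conjI allI impI)
  show "?W \<subseteq> E" using cut_edge_earlier_in[OF X Y] packing_subset_E by blast
  fix q assume q: "is_path E src dst s t q"
  show "set q \<inter> ?W \<noteq> {}"
  proof
    assume avoid: "set q \<inter> ?W = {}"
    have "set q \<inter> (X \<union> Y) \<noteq> {}" using q is_cut_L[OF X] unfolding is_cut_def by blast
    then obtain as e bs where split: "q = as @ e # bs" "e \<in> X \<union> Y" "set as \<inter> (X \<union> Y) = {}"
      using split_list_first_hit[of q "X \<union> Y"] by blast
    have "walkE s (as @ e # bs) t" using walk_path[OF q] split(1) by simp
    then have start: "walkE s as (src e)" by (simp only: walk_append_Cons)
    obtain p where p: "p \<in> P" "e \<in> set p"
      using split(2) L_subset_packed_edges_and_card_inter(1)[OF X]
        L_subset_packed_edges_and_card_inter(1)[OF Y] packed_edge_on_path by blast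
    have not_earlier: "e \<noteq> earlier p (cut_edge X p) (cut_edge Y p)" using avoid split(1) p(1) by auto
    show False
    proof (cases "e \<in> X")
      case True
      then have "e = cut_edge X p" using cut_edge_unique[OF X p(1) _ p(2)] by blast
      then have "\<not> precedes p e (cut_edge Y p)" "e \<noteq> cut_edge Y p"
        using not_earlier unfolding earlier_def by (auto split: if_splits)
      then have "precedes p (cut_edge Y p) e" "e \<noteq> cut_edge Y p"
        using precedes_total[OF p(2), of "cut_edge Y p"] cut_edge_in[OF Y p(1)] by auto
      then show False using no_avoiding_walk_to_later_edge[OF Y p(1) _ _ start] split(3) by blast
    next
      case False
      then have "e \<in> Y" using split(2) by blast
      then have "e = cut_edge Y p" using cut_edge_unique[OF Y p(1) _ p(2)] by blast
      then have "precedes p (cut_edge X p) e" "e \<noteq> cut_edge X p"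
        using not_earlier unfolding earlier_def by (auto split: if_splits)
      then show False using no_avoiding_walk_to_later_edge[OF X p(1) _ _ start] split(3) by blast
    qed
  qed
qed

lemma cut_join_in_L: "X \<in> L \<Longrightarrow> Y \<in> L \<Longrightarrow> cut_join P X Y \<in> L"
  using image_in_L(1)[OF cut_edge_later_in is_cut_later_image] cut_join_eq_image by simp

lemma cut_meet_in_L: "X \<in> L \<Longrightarrow> Y \<in> L \<Longrightarrow> cut_meet P X Y \<in> L"
  using image_in_L(1)[OF cut_edge_earlier_in is_cut_earlier_image] cut_meet_eq_image by simp

lemma cut_edge_cut_join:
  "X \<in> L \<Longrightarrow> Y \<in> L \<Longrightarrow> p \<in> P \<Longrightarrow> cut_edge (cut_join P X Y) p = later p (cut_edge X p) (cut_edge Y p)"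
  using image_in_L(2)[OF cut_edge_later_in is_cut_later_image] cut_join_eq_image by simp

lemma cut_edge_cut_meet:
  "X \<in> L \<Longrightarrow> Y \<in> L \<Longrightarrow> p \<in> P \<Longrightarrow> cut_edge (cut_meet P X Y) p = earlier p (cut_edge X p) (cut_edge Y p)"
  using image_in_L(2)[OF cut_edge_earlier_in is_cut_earlier_image] cut_meet_eq_image by simp

lemma precedes_cut_edge_cut_join1:
  "X \<in> L \<Longrightarrow> Y \<in> L \<Longrightarrow> p \<in> P \<Longrightarrow> precedes p (cut_edge X p) (cut_edge (cut_join P X Y) p)"
  by (simp add: cut_edge_cut_join precedes_later1 cut_edge_in)

lemma precedes_cut_edge_cut_join2:
  "X \<in> L \<Longrightarrow> Y \<in> L \<Longrightarrow> p \<in> P \<Longrightarrow> precedes p (cut_edge Y p) (cut_edge (cut_join P X Y) p)"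
  by (simp add: cut_edge_cut_join precedes_later2 cut_edge_in)

lemma cut_edge_cut_meet_eq_left:
  "X \<in> L \<Longrightarrow> Y \<in> L \<Longrightarrow> p \<in> P \<Longrightarrow> precedes p (cut_edge X p) (cut_edge Y p) \<Longrightarrow>
    cut_edge (cut_meet P X Y) p = cut_edge X p"
  by (simp add: cut_edge_cut_meet earlier_def)

lemma le_L_cut_join1: "X \<in> L \<Longrightarrow> Y \<in> L \<Longrightarrow> le_L X (cut_join P X Y)"
  by (simp add: le_L_iff_precedes cut_join_in_L precedes_cut_edge_cut_join1)

lemma le_L_cut_join2: "X \<in> L \<Longrightarrow> Y \<in> L \<Longrightarrow> le_L Y (cut_join P X Y)"
  by (simp add: le_L_iff_precedes cut_join_in_L precedes_cut_edge_cut_join2)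

lemma cut_join_le_L:
  "X \<in> L \<Longrightarrow> Y \<in> L \<Longrightarrow> Z \<in> L \<Longrightarrow> le_L X Z \<Longrightarrow> le_L Y Z \<Longrightarrow> le_L (cut_join P X Y) Z"
  by (simp add: le_L_iff_precedes cut_join_in_L cut_edge_cut_join later_def)

lemma cut_meet_le_L1: "X \<in> L \<Longrightarrow> Y \<in> L \<Longrightarrow> le_L (cut_meet P X Y) X"
  by (simp add: le_L_iff_precedes cut_meet_in_L cut_edge_cut_meet precedes_earlier1 cut_edge_in)

lemma cut_meet_le_L2: "X \<in> L \<Longrightarrow> Y \<in> L \<Longrightarrow> le_L (cut_meet P X Y) Y"
  by (simp add: le_L_iff_precedes cut_meet_in_L cut_edge_cut_meet precedes_earlier2 cut_edge_in)

section \<open>The lattice of minimum cuts\<close>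

lemma avoiding_walk_to_src_of_packed_edge:
  assumes X: "X \<in> L" and p: "p \<in> P" "e \<in> set p"
    and w: "walkE s w (dst e)" "set w \<inter> X = {}"
  shows "\<exists>w'. walkE s w' (src e) \<and> set w' \<inter> X = {}"
proof -
  define x where "x = cut_edge X p"
  have Xp: "X \<inter> set p = {x}" unfolding x_def using L_inter_packing[OF X p(1)] .
  have dist: "distinct p" using distinct_packing[OF p(1)] .
  show ?thesis
  proof (cases "precedes p e x \<and> e \<noteq> x")
    case True
    then obtain as bs cs where split: "p = as @ e # bs @ x # cs"
      using precedes_strict_split[of p e x] by blast
    then have "walkE s as (src e)" using walk_packing[OF p(1)] by (simp add: walk_append_Cons)
    moreover have "set as \<inter> X = {}" using Xp dist split by auto
    ultimately show ?thesis by blast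
  next
    case False
    have "x \<in> set p" using Xp by auto
    then have "precedes p x e" using False precedes_total[OF p(2) \<open>x \<in> set p\<close>] precedes_refl by auto
    obtain as bs where split: "p = as @ e # bs" using split_list[OF p(2)] by blast
    then have "walkE (dst e) bs t" using walk_packing[OF p(1)] by (simp add: walk_append_Cons)
    then have "walkE s (w @ bs) t" using w(1) by (auto simp: walk_append)
    then have "set (w @ bs) \<inter> X \<noteq> {}" by (rule cut_meets_walk[OF is_cut_L[OF X]])
    moreover have "x \<notin> set bs"
    proof
      assume "x \<in> set bs"
      then have "precedes p e x" using split unfolding precedes_def by auto
      then have "x = e" using precedes_antisym[OF dist \<open>precedes p x e\<close>] by simp
      then show False using \<open>x \<in> set bs\<close> dist split by simp
    qed
    then have "set bs \<inter> X = {}" using Xp split by auto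
    ultimately show ?thesis using w(2) by auto
  qed
qed

lemma res_reach_avoiding_walk:
  assumes X: "X \<in> L" and v: "v \<in> res_reach"
  shows "\<exists>w. walkE s w v \<and> set w \<inter> X = {}"
proof -
  have "(s, v) \<in> {(res_src a, res_dst a) | a. res_arc a}\<^sup>*" using v unfolding res_reach_def by simp
  then show ?thesis
  proof (induction rule: rtrancl_induct)
    case base
    show ?case by (intro exI[of _ "[]"]) simp
  next
    case (step u v)
    then obtain w where w: "walkE s w u" "set w \<inter> X = {}" by blast
    from step(2) obtain e b where a: "res_arc (e, b)" "u = res_src (e, b)" "v = res_dst (e, b)" by auto
    show ?case
    proof (cases b)
      case True
      then have e: "e \<in> E" "e \<notin> packed_edges" "src e = u" "dst e = v"
        using a unfolding res_arc_def res_src_def res_dst_def by auto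
      then have "e \<notin> X" using L_subset_packed_edges_and_card_inter(1)[OF X] by blast
      moreover have "walkE s (w @ [e]) v" using w(1) e by (simp add: walk_append)
      ultimately show ?thesis using w(2) by (intro exI[of _ "w @ [e]"]) auto
    next
      case False
      then have e: "e \<in> packed_edges" "dst e = u" "src e = v"
        using a unfolding res_arc_def res_src_def res_dst_def by auto
      then obtain p where p: "p \<in> P" "e \<in> set p" using packed_edge_on_path by blast
      have "walkE s w (dst e)" using w(1) e(2) by simp
      then show ?thesis using avoiding_walk_to_src_of_packed_edge[OF X p _ w(2)] e(3) by simp
    qed
  qed
qed

lemma leftmost_cut_le_L:
  assumes X: "X \<in> L"
  shows "le_L leftmost_cut X"
proof -
  have "precedes p (cut_edge leftmost_cut p) (cut_edge X p)" if p: "p \<in> P" for p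
  proof (rule ccontr)
    let ?z = "cut_edge leftmost_cut p"
    assume "\<not> precedes p ?z (cut_edge X p)"
    moreover have z: "?z \<in> set p" "?z \<in> leftmost_cut" using cut_edge_in[OF leftmost_cut_in_L p] by auto
    ultimately have "precedes p (cut_edge X p) ?z" "?z \<noteq> cut_edge X p"
      using precedes_total[OF z(1), of "cut_edge X p"] cut_edge_in[OF X p] precedes_refl[OF z(1)] by auto
    moreover have "src ?z \<in> res_reach" using z(2) unfolding leftmost_cut_def by simp
    then obtain w where "walkE s w (src ?z)" "set w \<inter> X = {}" using res_reach_avoiding_walk[OF X] by blast
    ultimately show False using no_avoiding_walk_to_later_edge[OF X p] by blast
  qed
  then show ?thesis using le_L_iff_precedes[OF leftmost_cut_in_L X] by blast
qed

lemma zero_L_eq_leftmost_cut: "zero_L E src dst s t = leftmost_cut"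
  unfolding zero_L_def
proof (rule the_equality)
  show "leftmost_cut \<in> L \<and> (\<forall>Y\<in>L. le_L leftmost_cut Y)" using leftmost_cut_in_L leftmost_cut_le_L by blast
  fix X assume "X \<in> L \<and> (\<forall>Y\<in>L. le_L X Y)"
  then show "X = leftmost_cut" using le_L_antisym leftmost_cut_in_L leftmost_cut_le_L by blast
qed

end

sublocale st_max_packing \<subseteq> cuts: join_semilattice_bot
  "min_cuts E src dst s t" "cut_le E src dst s t" "cut_join P" leftmost_cut
  by unfold_locales
    (fact le_L_refl le_L_antisym le_L_trans cut_join_in_L le_L_cut_join1 le_L_cut_join2 cut_join_le_L
      leftmost_cut_in_L leftmost_cut_le_L)+

context st_max_packing
begin

lemma U_lr_eq_mono_tuples: "U_lr E src dst s t k = cuts.mono_tuples k"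
  unfolding U_lr_def cuts.mono_tuples_def ..

lemma star_le_eq_tuple_le: "star_le E src dst s t = cuts.tuple_le"
  unfolding star_le_def cuts.tuple_le_def by (intro ext) simp

lemma J_star_eq_tuple_irreducibles: "J_star E src dst s t P k = {x. cuts.tuple_irreducible k x}"
  unfolding J_star_def U_lr_eq_mono_tuples star_le_eq_tuple_le star_join_def[abs_def] ..

lemma J_L_eq_irreducibles: "J_L E src dst s t P = {p. cuts.irreducible p}"
  unfolding J_L_def ..

lemma J_i_eq_image:
  "i < k \<Longrightarrow> J_i E src dst s t P k (Suc i) = (\<lambda>p. step_tuple i leftmost_cut p k) ` J_L E src dst s t P"
  unfolding J_i_def zero_L_eq_leftmost_cut by (auto simp: step_tuple_eq_replicate Suc_diff_Suc)

lemma J_star_eq_Union_J_i: "J_star E src dst s t P k = (\<Union>i\<in>{1..k}. J_i E src dst s t P k i)"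
proof -
  have "J_star E src dst s t P k = (\<Union>i<k. (\<lambda>p. step_tuple i leftmost_cut p k) ` J_L E src dst s t P)"
    unfolding J_star_eq_tuple_irreducibles J_L_eq_irreducibles cuts.tuple_irreducible_iff by blast
  also have "\<dots> = (\<Union>i<k. J_i E src dst s t P k (Suc i))" using J_i_eq_image by simp
  also have "\<dots> = (\<Union>i\<in>Suc ` {..<k}. J_i E src dst s t P k i)" by (simp only: image_image)
  also have "\<dots> = (\<Union>i\<in>{1..k}. J_i E src dst s t P k i)" by (simp only: image_Suc_lessThan)
  finally show ?thesis .
qed

section \<open>Join-irreducible minimum cuts\<close>

lemma J_L_in_L: "X \<in> J_L E src dst s t P \<Longrightarrow> X \<in> L"
  unfolding J_L_def join_irreducible_def by blast

lemma J_L_join_eq: "X \<in> J_L E src dst s t P \<Longrightarrow> Y \<in> L \<Longrightarrow> Z \<in> L \<Longrightarrow> cut_join P Y Z = X \<Longrightarrow> Y = X \<or> Z = X"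
  unfolding J_L_def join_irreducible_def by blast

lemma J_L_ne_leftmost_cut: "X \<in> J_L E src dst s t P \<Longrightarrow> X \<noteq> leftmost_cut"
  unfolding J_L_def join_irreducible_def using leftmost_cut_le_L by blast

text \<open>Each meet \<open>X \<sqinter> Y\<close> with a counterexample \<open>Y\<close> for \<open>p\<close> lies strictly below \<open>X\<close> and agrees with \<open>X\<close>
  on \<open>p\<close>; by join-irreducibility the join of these meets over \<open>Q\<close> still lies strictly below \<open>X\<close>.\<close>

lemma strictly_below_J_L_agreeing_on_paths:
  assumes X: "X \<in> J_L E src dst s t P" and "finite Q" "Q \<subseteq> P"
    and bad: "\<And>p. p \<in> Q \<Longrightarrow> \<exists>Y\<in>L. precedes p (cut_edge X p) (cut_edge Y p) \<and> \<not> le_L X Y"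
  shows "\<exists>W\<in>L. le_L W X \<and> W \<noteq> X \<and> (\<forall>p\<in>Q. precedes p (cut_edge X p) (cut_edge W p))"
  using \<open>finite Q\<close> \<open>Q \<subseteq> P\<close> bad
proof (induction Q rule: finite_induct)
  case empty
  show ?case using leftmost_cut_in_L leftmost_cut_le_L J_L_in_L[OF X] J_L_ne_leftmost_cut[OF X] by auto
next
  case (insert p Q)
  have XL: "X \<in> L" and p: "p \<in> P" using J_L_in_L[OF X] insert.prems(1) by auto
  obtain W where W: "W \<in> L" "le_L W X" "W \<noteq> X" "\<forall>q\<in>Q. precedes q (cut_edge X q) (cut_edge W q)"
    using insert by blast
  obtain Y where Y: "Y \<in> L" "precedes p (cut_edge X p) (cut_edge Y p)" "\<not> le_L X Y"
    using insert.prems(2) by blast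
  define M where "M = cut_meet P X Y"
  have M: "M \<in> L" "le_L M X" "cut_edge M p = cut_edge X p" "M \<noteq> X"
    unfolding M_def using cut_meet_in_L[OF XL Y(1)] cut_meet_le_L1[OF XL Y(1)]
      cut_edge_cut_meet_eq_left[OF XL Y(1) p Y(2)] cut_meet_le_L2[OF XL Y(1)] Y(3) by auto
  define W' where "W' = cut_join P W M"
  have W': "W' \<in> L" "le_L W' X" "W' \<noteq> X"
    unfolding W'_def using cut_join_in_L[OF W(1) M(1)] cut_join_le_L[OF W(1) M(1) XL W(2) M(2)]
      J_L_join_eq[OF X W(1) M(1)] W(3) M(4) by auto
  have "precedes q (cut_edge X q) (cut_edge W' q)" if q: "q \<in> insert p Q" for q
  proof (cases "q = p")
    case True
    then show ?thesis using precedes_cut_edge_cut_join2[OF W(1) M(1) p] M(3) unfolding W'_def by simp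
  next
    case False
    then have "q \<in> P" "precedes q (cut_edge X q) (cut_edge W q)" using W(4) q insert.prems(1) by auto
    then show ?thesis
      using precedes_trans[OF distinct_packing _ precedes_cut_edge_cut_join1[OF W(1) M(1)]]
      unfolding W'_def by blast
  qed
  then show ?case using W' by blast
qed

lemma J_L_witness_path:
  assumes X: "X \<in> J_L E src dst s t P"
  shows "\<exists>p\<in>P. \<forall>Y\<in>L. precedes p (cut_edge X p) (cut_edge Y p) \<longrightarrow> le_L X Y"
proof (rule ccontr)
  assume "\<not> ?thesis"
  then obtain W where W: "W \<in> L" "le_L W X" "W \<noteq> X" "\<forall>p\<in>P. precedes p (cut_edge X p) (cut_edge W p)"
    using strictly_below_J_L_agreeing_on_paths[OF X finite_P] by blast
  then have "le_L X W" using le_L_iff_precedes[OF J_L_in_L[OF X] W(1)] by blast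
  then show False using le_L_antisym[OF W(1) J_L_in_L[OF X] W(2)] W(3) by simp
qed

lemma cut_edge_precedes_if_same_src:
  assumes X: "X \<in> L" and X': "X' \<in> L" and p: "p \<in> P" and p': "p' \<in> P"
    and same_src: "src (cut_edge X p) = src (cut_edge X' p')"
  shows "precedes p (cut_edge X p) (cut_edge X' p)"
proof (rule ccontr)
  let ?f = "cut_edge X p"
  assume "\<not> precedes p ?f (cut_edge X' p)"
  then have later: "precedes p (cut_edge X' p) ?f" "?f \<noteq> cut_edge X' p"
    using precedes_total[of ?f p "cut_edge X' p"] precedes_refl cut_edge_in[OF X p] cut_edge_in[OF X' p]
    by auto
  define y where "y = cut_edge X' p'"
  have X'p': "X' \<inter> set p' = {y}" unfolding y_def using L_inter_packing[OF X' p'] .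
  then obtain as bs where split: "p' = as @ y # bs" using split_list by force
  then have "walkE s as (src y)" using walk_packing[OF p'] by (simp add: walk_append_Cons)
  moreover have "set as \<inter> X' = {}" using X'p' distinct_packing[OF p'] split by auto
  ultimately show False
    using no_avoiding_walk_to_later_edge[OF X' p later] cut_edge_in[OF X p] same_src unfolding y_def by simp
qed

lemma card_J_L_le: "card (J_L E src dst s t P) \<le> card V"
proof -
  let ?J = "J_L E src dst s t P"
  have "\<forall>X\<in>?J. \<exists>p. p \<in> P \<and> (\<forall>Y\<in>L. precedes p (cut_edge X p) (cut_edge Y p) \<longrightarrow> le_L X Y)"
    using J_L_witness_path by blast
  then obtain w where w: "\<And>X. X \<in> ?J \<Longrightarrow> w X \<in> P"
    "\<And>X Y. X \<in> ?J \<Longrightarrow> Y \<in> L \<Longrightarrow> precedes (w X) (cut_edge X (w X)) (cut_edge Y (w X)) \<Longrightarrow> le_L X Y"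
    by (metis bchoice)
  let ?v = "\<lambda>X. src (cut_edge X (w X))"
  have "inj_on ?v ?J"
  proof (rule inj_onI)
    fix X Y assume XY: "X \<in> ?J" "Y \<in> ?J" "?v X = ?v Y"
    have L: "X \<in> L" "Y \<in> L" using XY J_L_in_L by auto
    have "le_L X Y"
      using w(2)[OF XY(1) L(2) cut_edge_precedes_if_same_src[OF L w(1)[OF XY(1)] w(1)[OF XY(2)] XY(3)]] .
    moreover have "le_L Y X"
      using w(2)[OF XY(2) L(1)
          cut_edge_precedes_if_same_src[OF L(2) L(1) w(1)[OF XY(2)] w(1)[OF XY(1)] XY(3)[symmetric]]] .
    ultimately show "X = Y" using le_L_antisym L by blast
  qed
  moreover have "?v ` ?J \<subseteq> V"
    using cut_edge_in J_L_in_L w(1) packing_subset_E digraph unfolding digraph_def by blast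
  ultimately show ?thesis using card_inj_on_le finite_V by blast
qed

lemma finite_J_L: "finite (J_L E src dst s t P)"
proof -
  have "J_L E src dst s t P \<subseteq> Pow E" using J_L_in_L is_cut_L unfolding is_cut_def by blast
  then show ?thesis using finite_E finite_subset by blast
qed

lemma card_J_star_le: "card (J_star E src dst s t P k) \<le> k * card V"
proof -
  have "card (J_star E src dst s t P k) \<le> k * card (J_L E src dst s t P)"
    using cuts.card_tuple_irreducibles_le finite_J_L
    unfolding J_star_eq_tuple_irreducibles J_L_eq_irreducibles by blast
  also have "\<dots> \<le> k * card V" using card_J_L_le by simp
  finally show ?thesis .
qed

end

theorem lemma6:
  shows "\<exists>C::nat. \<forall>(V::nat set) (E::nat set) (src::nat \<Rightarrow> nat) (dst::nat \<Rightarrow> nat) s t P (k::nat).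
     digraph V E src dst \<and> s \<in> V \<and> t \<in> V \<and> s \<noteq> t \<and>
     max_path_packing E src dst s t P \<and> k \<ge> 1 \<longrightarrow>
       J_star E src dst s t P k = (\<Union>i\<in>{1..k}. J_i E src dst s t P k i) \<and>
       card (J_star E src dst s t P k) \<le> C * k * card V"
proof (intro exI[of _ 1] allI impI)
  fix V E src dst s t P k
  assume "digraph V E src dst \<and> s \<in> V \<and> t \<in> V \<and> s \<noteq> t \<and> max_path_packing E src dst s t P \<and> (k::nat) \<ge> 1"
  then interpret st_max_packing V E src dst s t P
    by unfold_locales blast+
  show "J_star E src dst s t P k = (\<Union>i\<in>{1..k}. J_i E src dst s t P k i) \<and>
      card (J_star E src dst s t P k) \<le> 1 * k * card V"
    using J_star_eq_Union_J_i card_J_star_le by simp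
qed

end
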